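(* Let $n\in\mathbb{N}$, $r\in(0,+\infty)$, let $A$ be an Arens–Michael algebra and let $a=(a_1,\dots,a_n)\in A^n$ be strictly spectrally $r$-contractive. Then there exists a unique continuous homomorphism $\gamma_a:\mathcal{F}^T(\mathbb{D}_r^n)\to A$ with $\gamma_a(\zeta_i)=a_i$ for $i=1,\dots,n$. Conversely, for every continuous homomorphism $\varphi:\mathcal{F}^T(\mathbb{D}_r^n)\to A$, the tuple $(\varphi(\zeta_1),\dots,\varphi(\zeta_n))$ is strictly spectrally $r$-contractive. Hence $a\mapsto\gamma_a$ is a bijection (natural in $A$) from the set of strictly spectrally $r$-contractive $n$-tuples in $A^n$ onto the set of continuous homomorphisms $\mathcal{F}^T(\mathbb{D}_r^n)\to A$.
   Context: All algebras are unital, homomorphisms unital. An Arens–Michael algebra is a complete locally convex algebra whose topology is given by a family of submultiplicative seminorms. $W_n$ is the set of all finite words $\alpha=(\alpha_1,\dots,\alpha_d)$ with $\alpha_j\in\{1,\dots,n\}$, $d\ge0$, $|\alpha|=d$; $W_{n,d}$ the words of length $d$; for $a\in A^n$, $a_\alpha=a_{\alpha_1}\cdots a_{\alpha_d}$ ($a_\emptyset=1$). $\mathcal{F}^T(\mathbb{D}_r^n)=\{\sum_{\alpha\in W_n}c_\alpha\zeta_\alpha:\|\cdot\|_\rho<\infty\ \forall\rho\in(0,r)\}$ with $\|\sum c_\alpha\zeta_\alpha\|_\rho=\sum_\alpha|c_\alpha|\rho^{|\alpha|}$, topology given by these norms and multiplication by concatenation of words. For a Banach algebra $B$ and $b\in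 B^n$, $r_\infty(b)=\lim_{d\to\infty}(\sup_{\alpha\in W_{n,d}}\|b_\alpha\|)^{1/d}$. An $n$-tuple $a\in A^n$ in an Arens–Michael algebra $A$ is strictly spectrally $r$-contractive if for every Banach algebra $B$ and every continuous homomorphism $\varphi:A\to B$ one has $r_\infty(\varphi(a))<r$; equivalently, for every continuous submultiplicative seminorm $\|\cdot\|$ on $A$ from a directed defining family, $\lim_{d\to\infty}(\sup_{\alpha\in W_{n,d}}\|a_\alpha\|)^{1/d}<r$. *)

theory Defs
  imports "HOL-Analysis.Analysis"
begin

text \<open>The carrier is a type
  of class ring_1 (unital ring); the complex scalar multiplication is an explicit
  parameter smul; the topology is given by a family P of seminorms.\<close>

definition cauchy_filter_P :: "('a::ring_1 \<Rightarrow> real) set \<Rightarrow> 'a filter \<Rightarrow> bool" where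
  "cauchy_filter_P P F \<longleftrightarrow>
     (\<forall>p\<in>P. \<forall>e>0. eventually (\<lambda>(x, y). p (x - y) < e) (F \<times>\<^sub>F F))"

definition converges_P :: "('a::ring_1 \<Rightarrow> real) set \<Rightarrow> 'a filter \<Rightarrow> 'a \<Rightarrow> bool" where
  "converges_P P F x \<longleftrightarrow> (\<forall>p\<in>P. \<forall>e>0. eventually (\<lambda>y. p (y - x) < e) F)"

definition AM_algebra :: "(complex \<Rightarrow> 'a::ring_1 \<Rightarrow> 'a) \<Rightarrow> ('a \<Rightarrow> real) set \<Rightarrow> bool" where
  "AM_algebra smul P \<longleftrightarrow>
     \<comment> \<open>complex algebra axioms\<close>
     (\<forall>z w x. smul z (smul w x) = smul (z * w) x) \<and>
     (\<forall>x. smul 1 x = x) \<and>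
     (\<forall>z w x. smul (z + w) x = smul z x + smul w x) \<and>
     (\<forall>z x y. smul z (x + y) = smul z x + smul z y) \<and>
     (\<forall>z x y. smul z (x * y) = smul z x * y) \<and>
     (\<forall>z x y. smul z (x * y) = x * smul z y) \<and>
     \<comment> \<open>submultiplicative seminorms\<close>
     (\<forall>p\<in>P. (\<forall>z x. p (smul z x) = cmod z * p x) \<and>
             (\<forall>x y. p (x + y) \<le> p x + p y) \<and>
             (\<forall>x y. p (x * y) \<le> p x * p y)) \<and>
     \<comment> \<open>directed defining family\<close>
     (\<forall>p\<in>P. \<forall>q\<in>P. \<exists>s\<in>P. \<forall>x. p x \<le> s x \<and> q x \<le> s x) \<and>
     \<comment> \<open>Hausdorff\<close>
     (\<forall>x. (\<forall>p\<in>P. p x = 0) \<longrightarrow> x = 0) \<and>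
     \<comment> \<open>complete: every Cauchy filter converges\<close>
     (\<forall>F. F \<noteq> bot \<and> cauchy_filter_P P F \<longrightarrow> (\<exists>x. converges_P P F x))"

definition cont_hom ::
  "(complex \<Rightarrow> 'a::ring_1 \<Rightarrow> 'a) \<Rightarrow> ('a \<Rightarrow> real) set \<Rightarrow>
   (complex \<Rightarrow> 'b::ring_1 \<Rightarrow> 'b) \<Rightarrow> ('b \<Rightarrow> real) set \<Rightarrow> ('a \<Rightarrow> 'b) \<Rightarrow> bool" where
  "cont_hom smulA PA smulB PB \<psi> \<longleftrightarrow>
     (\<forall>x y. \<psi> (x + y) = \<psi> x + \<psi> y) \<and>
     (\<forall>z x. \<psi> (smulA z x) = smulB z (\<psi> x)) \<and>
     (\<forall>x y. \<psi> (x * y) = \<psi> x * \<psi> y) \<and>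
     \<psi> 1 = 1 \<and>
     (\<forall>q\<in>PB. \<exists>p\<in>PA. \<exists>C. \<forall>x. q (\<psi> x) \<le> C * p x)"

definition words :: "nat \<Rightarrow> nat list set" where
  "words n = {\<alpha>. \<forall>i\<in>set \<alpha>. i < n}"

text \<open>The algebra F^T(D_r^n): coefficient functions on words.\<close>
definition FT :: "nat \<Rightarrow> real \<Rightarrow> (nat list \<Rightarrow> complex) set" where
  "FT n r = {c. (\<forall>\<alpha>. \<alpha> \<notin> words n \<longrightarrow> c \<alpha> = 0) \<and>
     (\<forall>\<rho>. 0 < \<rho> \<and> \<rho> < r \<longrightarrow> (\<lambda>\<alpha>. cmod (c \<alpha>) * \<rho> ^ length \<alpha>) summable_on words n)}"

definition ft_norm :: "nat \<Rightarrow> real \<Rightarrow> (nat list \<Rightarrow> complex) \<Rightarrow> real" where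
  "ft_norm n \<rho> c = (\<Sum>\<^sub>\<infinity>\<alpha>\<in>words n. cmod (c \<alpha>) * \<rho> ^ length \<alpha>)"

definition ft_add :: "(nat list \<Rightarrow> complex) \<Rightarrow> (nat list \<Rightarrow> complex) \<Rightarrow> nat list \<Rightarrow> complex" where
  "ft_add c d = (\<lambda>\<alpha>. c \<alpha> + d \<alpha>)"

definition ft_smul :: "complex \<Rightarrow> (nat list \<Rightarrow> complex) \<Rightarrow> nat list \<Rightarrow> complex" where
  "ft_smul z c = (\<lambda>\<alpha>. z * c \<alpha>)"

text \<open>Multiplication: concatenation of words, i.e. sum over all splittings.\<close>
definition ft_mult :: "(nat list \<Rightarrow> complex) \<Rightarrow> (nat list \<Rightarrow> complex) \<Rightarrow> nat list \<Rightarrow> complex" where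
  "ft_mult c d = (\<lambda>\<gamma>. \<Sum>k\<le>length \<gamma>. c (take k \<gamma>) * d (drop k \<gamma>))"

definition ft_one :: "nat list \<Rightarrow> complex" where
  "ft_one = (\<lambda>\<alpha>. if \<alpha> = [] then 1 else 0)"

text \<open>The generator zeta_(i+1) (0-based index i).\<close>
definition ft_gen :: "nat \<Rightarrow> nat list \<Rightarrow> complex" where
  "ft_gen i = (\<lambda>\<alpha>. if \<alpha> = [i] then 1 else 0)"

definition ft_cont_homs ::
  "(complex \<Rightarrow> 'a::ring_1 \<Rightarrow> 'a) \<Rightarrow> ('a \<Rightarrow> real) set \<Rightarrow> nat \<Rightarrow> real \<Rightarrow>
   ((nat list \<Rightarrow> complex) \<Rightarrow> 'a) set" where
  "ft_cont_homs smul P n r = {\<phi>. \<phi> \<in> extensional (FT n r) \<and>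
     (\<forall>c\<in>FT n r. \<forall>d\<in>FT n r. \<phi> (ft_add c d) = \<phi> c + \<phi> d) \<and>
     (\<forall>z. \<forall>c\<in>FT n r. \<phi> (ft_smul z c) = smul z (\<phi> c)) \<and>
     (\<forall>c\<in>FT n r. \<forall>d\<in>FT n r. \<phi> (ft_mult c d) = \<phi> c * \<phi> d) \<and>
     \<phi> ft_one = 1 \<and>
     (\<forall>p\<in>P. \<exists>\<rho>. 0 < \<rho> \<and> \<rho> < r \<and> (\<exists>C. \<forall>c\<in>FT n r. p (\<phi> c) \<le> C * ft_norm n \<rho> c))}"

text \<open>a_alpha for a tuple a given as a list of length n.\<close>
definition word_prod :: "'a::monoid_mult list \<Rightarrow> nat list \<Rightarrow> 'a" where
  "word_prod a \<alpha> = prod_list (map (\<lambda>i. a ! i) \<alpha>)"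

text \<open>Strict spectral r-contractivity, via the (directed) defining family P.
  The supremum over the finite set W_{n,d} is taken together with 0
  (which is harmless as seminorms are nonnegative, and gives 0 for n = 0).\<close>
definition ssc :: "('a::ring_1 \<Rightarrow> real) set \<Rightarrow> nat \<Rightarrow> real \<Rightarrow> 'a list \<Rightarrow> bool" where
  "ssc P n r a \<longleftrightarrow> (\<forall>p\<in>P.
     lim (\<lambda>d. root d (Max (insert 0 {p (word_prod a \<alpha>) | \<alpha>. \<alpha> \<in> words n \<and> length \<alpha> = d}))) < r)"

definition ft_gamma ::
  "(complex \<Rightarrow> 'a::ring_1 \<Rightarrow> 'a) \<Rightarrow> ('a \<Rightarrow> real) set \<Rightarrow> nat \<Rightarrow> real \<Rightarrow> 'a list \<Rightarrow>
   (nat list \<Rightarrow> complex) \<Rightarrow> 'a" where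
  "ft_gamma smul P n r a = (THE \<phi>. \<phi> \<in> ft_cont_homs smul P n r \<and> (\<forall>i<n. \<phi> (ft_gen i) = a ! i))"

end

theory Submission
  imports Defs
begin

text \<open>A tuple \<open>a\<close> is strictly spectrally \<open>r\<close>-contractive iff for every defining seminorm \<open>p\<close>
  there are \<open>\<rho> < r\<close> and \<open>C\<close> with \<open>p(a\<^sub>\<alpha>) \<le> C \<rho>\<^bsup>|\<alpha>|\<^esup>\<close> for all words \<open>\<alpha>\<close>; the limit defining
  the spectral radius exists by Fekete's lemma, as the maxima of \<open>p(a\<^sub>\<alpha>)\<close> over words of length
  \<open>d\<close> form a submultiplicative sequence. Given such bounds, \<open>\<Sum> c\<^sub>\<alpha> a\<^sub>\<alpha>\<close> converges absolutely
  in every seminorm, completeness yields \<open>\<gamma>\<^sub>a\<close>, and multiplicativity is the Cauchy product.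
  Conversely, a continuous homomorphism is dominated by some \<open>\<parallel>\<cdot>\<parallel>\<^sub>\<rho>\<close> with \<open>\<rho> < r\<close>, and
  \<open>\<parallel>\<zeta>\<^sub>\<alpha>\<parallel>\<^sub>\<rho> = \<rho>\<^bsup>|\<alpha>|\<^esup>\<close> gives the same bounds for the images of the generators. Uniqueness
  holds since the tail of a series beyond degree \<open>N\<close> has \<open>\<parallel>\<cdot>\<parallel>\<^sub>\<rho>\<close>-norm
  \<open>O((\<rho>/\<rho>')\<^sup>N)\<close> for \<open>\<rho> < \<rho>' < r\<close>.\<close>

section \<open>Submultiplicative sequences and double series\<close>

lemma submultiplicative_le_power_div:
  fixes M :: "nat \<Rightarrow> real"
  assumes nonneg: "\<And>d. 0 \<le> M d" and submult: "\<And>i j. M (i + j) \<le> M i * M j"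
    and "0 < m" and K: "\<And>s. s < m \<Longrightarrow> M s \<le> K"
  shows "M d \<le> K * M m ^ (d div m)"
proof (induction d rule: less_induct)
  case (less d)
  show ?case
  proof (cases "d < m")
    case True
    then show ?thesis using K by simp
  next
    case False
    then have "d = m + (d - m)" "d - m < d" "d div m = Suc ((d - m) div m)"
      using \<open>0 < m\<close> by (auto simp: le_div_geq)
    then have "M d \<le> M m * M (d - m)" using submult[of m "d - m"] by simp
    also have "\<dots> \<le> M m * (K * M m ^ ((d - m) div m))"
      using less \<open>d - m < d\<close> nonneg by (intro mult_left_mono) auto
    finally show ?thesis using \<open>d div m = _\<close> by (simp add: mult.left_commute)
  qed
qed

lemma geometric_bound_imp_root_eventually_less:
  fixes M :: "nat \<Rightarrow> real"
  assumes nonneg: "\<And>d. 0 \<le> M d" and bound: "\<And>d. M d \<le> C * y ^ d" and "0 < y" "y < t"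
  shows "\<forall>\<^sub>F d in sequentially. root d (M d) < t"
proof -
  define C' where "C' = max C 1"
  have "(\<lambda>d. root d C' * y) \<longlonglongrightarrow> 1 * y"
    unfolding C'_def by (intro tendsto_intros LIMSEQ_root_const) auto
  then have "\<forall>\<^sub>F d in sequentially. root d C' * y < t"
    using \<open>y < t\<close> by (intro order_tendstoD(2)) auto
  then have ev: "\<forall>\<^sub>F d in sequentially. root d C' * y < t \<and> 0 < d"
    by (intro eventually_conj eventually_gt_at_top)
  have "root d (M d) \<le> root d C' * y" if "d > 0" for d
  proof -
    have "C * y ^ d \<le> C' * y ^ d"
      unfolding C'_def using \<open>0 < y\<close> by (intro mult_right_mono) auto
    with bound[of d] have "M d \<le> C' * y ^ d" by linarith
    with that have "root d (M d) \<le> root d (C' * y ^ d)" by (rule real_root_le_mono)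
    also have "\<dots> = root d C' * y"
      using that \<open>0 < y\<close> by (simp add: real_root_mult real_root_power_cancel)
    finally show ?thesis .
  qed
  with ev show ?thesis by (elim eventually_mono) (meson le_less_trans)
qed

lemma root_eventually_less_imp_geometric_bound:
  fixes M :: "nat \<Rightarrow> real"
  assumes nonneg: "\<And>d. 0 \<le> M d" and "0 < y"
    and ev: "\<forall>\<^sub>F d in sequentially. root d (M d) < y"
  obtains C where "0 \<le> C" "\<And>d. M d \<le> C * y ^ d"
proof -
  obtain D where D: "\<And>d. d \<ge> D \<Longrightarrow> root d (M d) < y"
    using ev unfolding eventually_sequentially by blast
  define C where "C = (\<Sum>d\<le>D. M d / y ^ d) + 1"
  have "M d \<le> C * y ^ d" for d
  proof (cases "d \<le> D")
    case True
    then have "M d / y ^ d \<le> (\<Sum>d\<le>D. M d / y ^ d)"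
      using nonneg \<open>0 < y\<close> by (intro member_le_sum) auto
    then have "M d / y ^ d \<le> C" unfolding C_def by linarith
    then show ?thesis using \<open>0 < y\<close> by (simp add: divide_le_eq)
  next
    case False
    then have "M d = root d (M d) ^ d" using nonneg[of d] by simp
    also have "\<dots> \<le> y ^ d"
      using D[of d] False nonneg[of d] by (intro power_mono) (auto simp: real_root_ge_zero)
    also have "\<dots> \<le> C * y ^ d"
      unfolding C_def using nonneg \<open>0 < y\<close> by (simp add: sum_nonneg)
    finally show ?thesis .
  qed
  moreover have "0 \<le> C" unfolding C_def using nonneg \<open>0 < y\<close> by (simp add: sum_nonneg)
  ultimately show ?thesis using that by blast
qed

text \<open>Fekete's lemma in multiplicative form: with \<open>x = root m (M m)\<close>, submultiplicativity gives
  \<open>M d \<le> K * x ^ (m * (d div m))\<close>, a geometric bound of ratio arbitrarily close to \<open>x\<close>.\<close>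

lemma submultiplicative_root_eventually_less:
  fixes M :: "nat \<Rightarrow> real"
  assumes nonneg: "\<And>d. 0 \<le> M d" and submult: "\<And>i j. M (i + j) \<le> M i * M j"
    and "0 < m" and t: "root m (M m) < t"
  shows "\<forall>\<^sub>F d in sequentially. root d (M d) < t"
proof -
  define x where "x = root m (M m)"
  define y where "y = (x + t) / 2"
  define K where "K = (\<Sum>s<m. M s)"
  have "0 \<le> x" unfolding x_def using nonneg by (simp add: real_root_ge_zero)
  then have y: "0 < y" "x < y" "y < t" using t unfolding x_def y_def by auto
  have "M d \<le> (K * (1 + (1 / y) ^ m)) * y ^ d" for d
  proof -
    have "M s \<le> K" if "s < m" for s
      unfolding K_def using nonneg that by (intro member_le_sum) auto
    then have "M d \<le> K * M m ^ (d div m)"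
      by (rule submultiplicative_le_power_div[of M m K d, OF nonneg submult \<open>0 < m\<close>])
    also have "M m ^ (d div m) = x ^ (m * (d div m))"
      unfolding x_def using \<open>0 < m\<close> nonneg[of m] by (simp add: power_mult)
    also have "\<dots> \<le> y ^ (m * (d div m))"
      using \<open>0 \<le> x\<close> y by (intro power_mono) auto
    also have "\<dots> = (1 / y) ^ (d mod m) * y ^ d"
      using y by (simp add: field_simps flip: power_add)
    also have "(1 / y) ^ (d mod m) \<le> 1 + (1 / y) ^ m"
    proof (cases "1 / y \<le> 1")
      case True
      then have "(1 / y) ^ (d mod m) \<le> 1" using y by (intro power_le_one) auto
      moreover have "0 \<le> (1 / y) ^ m" using y by simp
      ultimately show ?thesis by linarith
    next
      case False
      then have "(1 / y) ^ (d mod m) \<le> (1 / y) ^ m"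
        using \<open>0 < m\<close> by (intro power_increasing) auto
      then show ?thesis by simp
    qed
    finally show ?thesis
      using y nonneg unfolding K_def
      by (simp add: sum_nonneg mult_left_mono mult_right_mono mult.assoc)
  qed
  then show ?thesis
    by (rule geometric_bound_imp_root_eventually_less[OF nonneg _ y(1,3)])
qed

lemma submultiplicative_root_convergent:
  fixes M :: "nat \<Rightarrow> real"
  assumes nonneg: "\<And>d. 0 \<le> M d" and submult: "\<And>i j. M (i + j) \<le> M i * M j"
  shows "convergent (\<lambda>d. root d (M d))"
proof -
  let ?x = "\<lambda>d. root d (M d)"
  define L where "L = (INF d\<in>{1..}. ?x d)"
  have bdd: "bdd_below (?x ` {1..})"
    using nonneg by (intro bdd_belowI2[of _ 0]) (simp add: real_root_ge_zero)
  have "?x \<longlonglongrightarrow> L"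
  proof (rule order_tendstoI)
    fix a assume "a < L"
    moreover have "L \<le> ?x d" if "d \<ge> 1" for d
      unfolding L_def using that bdd by (intro cINF_lower) auto
    ultimately show "\<forall>\<^sub>F d in sequentially. a < ?x d"
      unfolding eventually_sequentially by (meson less_le_trans)
  next
    fix a assume "L < a"
    then obtain m where m: "m \<ge> 1" "?x m < a"
      using cINF_less_iff[OF _ bdd] unfolding L_def by auto
    have "\<forall>\<^sub>F d in sequentially. ?x d < (?x m + a) / 2"
      by (rule submultiplicative_root_eventually_less[of M m, OF nonneg submult]) (use m in auto)
    then show "\<forall>\<^sub>F d in sequentially. ?x d < a"
    proof (rule eventually_mono)
      show "?x d < a" if "?x d < (?x m + a) / 2" for d using that m(2) by (simp add: field_simps)
    qed
  qed
  then show ?thesis by (rule convergentI)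
qed

lemma sum_triangle_le_product:
  fixes x y :: "nat \<Rightarrow> real"
  assumes "\<And>i. 0 \<le> x i" "\<And>i. 0 \<le> y i"
  shows "(\<Sum>k<N. \<Sum>i\<le>k. x i * y (k - i)) \<le> (\<Sum>i<N. x i) * (\<Sum>j<N. y j)"
proof -
  have "(\<Sum>k<N. \<Sum>i\<le>k. x i * y (k - i)) = (\<Sum>(i, j)\<in>{(i, j). i + j < N}. x i * y j)"
    by (rule sum.triangle_reindex[symmetric])
  also have "\<dots> \<le> (\<Sum>(i, j)\<in>{..<N} \<times> {..<N}. x i * y j)"
    by (rule sum_mono2) (auto simp: assms)
  also have "\<dots> = (\<Sum>i<N. x i) * (\<Sum>j<N. y j)"
    by (simp add: sum_product sum.cartesian_product)
  finally show ?thesis .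
qed

lemma sum_square_minus_triangle_tendsto_zero:
  fixes x y :: "nat \<Rightarrow> real"
  assumes "\<And>i. 0 \<le> x i" "\<And>j. 0 \<le> y j" "summable x" "summable y"
  shows "(\<lambda>N. \<Sum>(i, j)\<in>{..<N} \<times> {..<N} - {(i, j). i + j < N}. x i * y j) \<longlonglongrightarrow> 0"
proof -
  have triangle: "{(i, j). i + j < N} \<subseteq> {..<N} \<times> {..<N}" for N :: nat by auto
  have "(\<lambda>N. (\<Sum>i<N. x i) * (\<Sum>j<N. y j)) \<longlonglongrightarrow> suminf x * suminf y"
    by (intro tendsto_mult summable_LIMSEQ assms)
  moreover have "(\<lambda>N. \<Sum>k<N. \<Sum>i\<le>k. x i * y (k - i)) \<longlonglongrightarrow> suminf x * suminf y"
    using Cauchy_product_sums[of x y] assms unfolding sums_def by simp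
  ultimately have "(\<lambda>N. (\<Sum>i<N. x i) * (\<Sum>j<N. y j) - (\<Sum>k<N. \<Sum>i\<le>k. x i * y (k - i))) \<longlonglongrightarrow> 0"
    using tendsto_diff by fastforce
  moreover have "(\<Sum>i<N. x i) * (\<Sum>j<N. y j) - (\<Sum>k<N. \<Sum>i\<le>k. x i * y (k - i))
      = (\<Sum>(i, j)\<in>{..<N} \<times> {..<N} - {(i, j). i + j < N}. x i * y j)" for N
  proof -
    have "(\<Sum>i<N. x i) * (\<Sum>j<N. y j) = (\<Sum>(i, j)\<in>{..<N} \<times> {..<N}. x i * y j)"
      by (simp add: sum_product sum.cartesian_product)
    moreover have "(\<Sum>k<N. \<Sum>i\<le>k. x i * y (k - i)) = (\<Sum>(i, j)\<in>{(i, j). i + j < N}. x i * y j)"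
      by (rule sum.triangle_reindex[symmetric])
    ultimately show ?thesis by (simp add: sum_diff[OF _ triangle])
  qed
  ultimately show ?thesis by simp
qed

section \<open>Arens--Michael algebras\<close>

locale arens_michael =
  fixes smul :: "complex \<Rightarrow> 'a::ring_1 \<Rightarrow> 'a" and P :: "('a \<Rightarrow> real) set"
  assumes AM: "AM_algebra smul P"
begin

lemma smul_assoc: "smul z (smul w x) = smul (z * w) x"
  using AM unfolding AM_algebra_def by (elim conjE) fast

lemma smul_one: "smul 1 x = x"
  using AM unfolding AM_algebra_def by (elim conjE) fast

lemma smul_add_left: "smul (z + w) x = smul z x + smul w x"
  using AM unfolding AM_algebra_def by (elim conjE) fast

lemma smul_add_right: "smul z (x + y) = smul z x + smul z y"
  using AM unfolding AM_algebra_def by (elim conjE) fast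

lemma smul_mult_left: "smul z (x * y) = smul z x * y"
  using AM unfolding AM_algebra_def by (elim conjE) fast

lemma smul_mult_right: "smul z (x * y) = x * smul z y"
  using AM unfolding AM_algebra_def by (elim conjE) fast

lemma seminorm_smul: "p \<in> P \<Longrightarrow> p (smul z x) = cmod z * p x"
  using AM unfolding AM_algebra_def by (elim conjE) fast

lemma seminorm_add: "p \<in> P \<Longrightarrow> p (x + y) \<le> p x + p y"
  using AM unfolding AM_algebra_def by (elim conjE) fast

lemma seminorm_mult: "p \<in> P \<Longrightarrow> p (x * y) \<le> p x * p y"
  using AM unfolding AM_algebra_def by (elim conjE) fast

lemma seminorms_separate: "(\<And>p. p \<in> P \<Longrightarrow> p x = 0) \<Longrightarrow> x = 0"
  using AM unfolding AM_algebra_def by auto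

lemma cauchy_filter_converges: "F \<noteq> bot \<Longrightarrow> cauchy_filter_P P F \<Longrightarrow> \<exists>x. converges_P P F x"
  using AM unfolding AM_algebra_def by (elim conjE) fast

lemma smul_zero_left [simp]: "smul 0 x = 0"
  using smul_add_left[of 0 0 x] by simp

lemma smul_zero_right [simp]: "smul z 0 = 0"
  using smul_add_right[of z 0 0] by simp

lemma smul_minus_one: "smul (-1) x = - x"
  using smul_add_left[of 1 "-1" x] by (simp add: smul_one add_eq_0_iff)

lemma smul_sum_left: "smul (\<Sum>i\<in>F. f i) x = (\<Sum>i\<in>F. smul (f i) x)"
  by (induction F rule: infinite_finite_induct) (auto simp: smul_add_left)

lemma smul_sum_right: "smul z (\<Sum>i\<in>F. f i) = (\<Sum>i\<in>F. smul z (f i))"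
  by (induction F rule: infinite_finite_induct) (auto simp: smul_add_right)

lemma smul_mult_mult: "smul (z * w) (x * y) = smul z x * smul w y"
  by (simp add: smul_mult_left smul_mult_right smul_assoc flip: smul_mult_left)

lemma seminorm_zero [simp]: "p \<in> P \<Longrightarrow> p 0 = 0"
  using seminorm_smul[of p 0 0] by simp

lemma seminorm_minus: "p \<in> P \<Longrightarrow> p (- x) = p x"
  using seminorm_smul[of p "-1" x] by (simp add: smul_minus_one)

lemma seminorm_nonneg: "p \<in> P \<Longrightarrow> 0 \<le> p x"
  using seminorm_add[of p x "- x"] seminorm_minus[of p x] by simp

lemma seminorm_diff_commute: "p \<in> P \<Longrightarrow> p (x - y) = p (y - x)"
  using seminorm_minus[of p "y - x"] by simp

lemma seminorm_diff_triangle: "p \<in> P \<Longrightarrow> p (x - z) \<le> p (x - y) + p (y - z)"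
  using seminorm_add[of p "x - y" "y - z"] by simp

lemma seminorm_sum: "p \<in> P \<Longrightarrow> p (\<Sum>i\<in>F. f i) \<le> (\<Sum>i\<in>F. p (f i))"
proof (induction F rule: infinite_finite_induct)
  case (insert x F)
  then show ?case using seminorm_add[of p "f x" "sum f F"] by simp
qed auto

definition converges_to :: "(nat \<Rightarrow> 'a) \<Rightarrow> 'a \<Rightarrow> bool" where
  "converges_to f x \<longleftrightarrow> (\<forall>p\<in>P. (\<lambda>N. p (f N - x)) \<longlonglongrightarrow> 0)"

lemma converges_to_unique:
  assumes "converges_to f x" "converges_to f y"
  shows "x = y"
proof -
  have "p (x - y) = 0" if p: "p \<in> P" for p
  proof -
    have "(\<lambda>N. p (f N - x) + p (f N - y)) \<longlonglongrightarrow> 0"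
      using assms p unfolding converges_to_def by (intro tendsto_add_zero) auto
    moreover have "p (x - y) \<le> p (f N - x) + p (f N - y)" for N
      using seminorm_diff_triangle[OF p, of x y "f N"] seminorm_diff_commute[OF p, of x "f N"]
      by linarith
    ultimately have "p (x - y) \<le> 0" using LIMSEQ_le_const by blast
    then show ?thesis using seminorm_nonneg[OF p] by (meson antisym)
  qed
  then show ?thesis using seminorms_separate[of "x - y"] by simp
qed

lemma converges_toI_bound:
  assumes "\<And>p. p \<in> P \<Longrightarrow> \<exists>b. b \<longlonglongrightarrow> 0 \<and> (\<forall>N. p (f N - x) \<le> b N)"
  shows "converges_to f x"
  unfolding converges_to_def
proof
  fix p assume p: "p \<in> P"
  then obtain b where b: "b \<longlonglongrightarrow> 0" "\<And>N. p (f N - x) \<le> b N" using assms by blast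
  show "(\<lambda>N. p (f N - x)) \<longlonglongrightarrow> 0"
    by (rule tendsto_sandwich[OF _ _ tendsto_const b(1)]) (simp_all add: seminorm_nonneg[OF p] b(2))
qed

lemma converges_to_eventually_const:
  assumes "\<And>N. N \<ge> N0 \<Longrightarrow> f N = x"
  shows "converges_to f x"
  unfolding converges_to_def
proof
  fix p assume "p \<in> P"
  then have "\<forall>N\<ge>N0. p (f N - x) = 0" using assms by simp
  then have "\<forall>\<^sub>F N in sequentially. p (f N - x) = 0"
    unfolding eventually_sequentially by blast
  then show "(\<lambda>N. p (f N - x)) \<longlonglongrightarrow> 0" by (rule tendsto_eventually)
qed

lemma converges_to_add:
  assumes f: "converges_to f x" and g: "converges_to g y"
  shows "converges_to (\<lambda>N. f N + g N) (x + y)"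
proof (rule converges_toI_bound)
  fix p assume p: "p \<in> P"
  have "\<forall>N. p (f N + g N - (x + y)) \<le> p (f N - x) + p (g N - y)"
    using seminorm_add[OF p] by (simp only: add_diff_add simp_thms)
  moreover have "(\<lambda>N. p (f N - x) + p (g N - y)) \<longlonglongrightarrow> 0"
    using f g p unfolding converges_to_def by (intro tendsto_add_zero) auto
  ultimately show "\<exists>b. b \<longlonglongrightarrow> 0 \<and> (\<forall>N. p (f N + g N - (x + y)) \<le> b N)" by blast
qed

lemma converges_to_smul:
  assumes "converges_to f x"
  shows "converges_to (\<lambda>N. smul z (f N)) (smul z x)"
proof (rule converges_toI_bound)
  fix p assume p: "p \<in> P"
  have "smul z (f N) - smul z x = smul z (f N - x)" for N
    using smul_add_right[of z "f N - x" x] by simp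
  then have "\<forall>N. p (smul z (f N) - smul z x) \<le> cmod z * p (f N - x)"
    by (simp add: seminorm_smul[OF p])
  moreover have "(\<lambda>N. cmod z * p (f N - x)) \<longlonglongrightarrow> 0"
    using assms p unfolding converges_to_def by (metis mult_zero_right tendsto_mult_left)
  ultimately show "\<exists>b. b \<longlonglongrightarrow> 0 \<and> (\<forall>N. p (smul z (f N) - smul z x) \<le> b N)" by blast
qed

lemma converges_to_mult:
  assumes f: "converges_to f x" and g: "converges_to g y"
  shows "converges_to (\<lambda>N. f N * g N) (x * y)"
proof (rule converges_toI_bound)
  fix p assume p: "p \<in> P"
  let ?b = "\<lambda>N. p (f N - x) * (p (g N - y) + p y) + p x * p (g N - y)"
  have "p (f N * g N - x * y) \<le> ?b N" for N
  proof -
    have "f N * g N - x * y = (f N - x) * g N + x * (g N - y)" by (simp add: algebra_simps)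
    then have "p (f N * g N - x * y) \<le> p ((f N - x) * g N) + p (x * (g N - y))"
      using seminorm_add[OF p] by simp
    also have "\<dots> \<le> p (f N - x) * p (g N) + p x * p (g N - y)"
      by (intro add_mono seminorm_mult[OF p])
    also have "\<dots> \<le> ?b N"
      using seminorm_add[OF p, of "g N - y" y] seminorm_nonneg[OF p]
      by (intro add_right_mono mult_left_mono) auto
    finally show ?thesis .
  qed
  moreover have "?b \<longlonglongrightarrow> 0 * (0 + p y) + p x * 0"
    using f g p unfolding converges_to_def by (intro tendsto_intros) auto
  ultimately show "\<exists>b. b \<longlonglongrightarrow> 0 \<and> (\<forall>N. p (f N * g N - x * y) \<le> b N)" by auto
qed

lemma converges_to_asymptotic:
  assumes g: "converges_to g y" and fg: "\<And>p. p \<in> P \<Longrightarrow> (\<lambda>N. p (f N - g N)) \<longlonglongrightarrow> 0"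
  shows "converges_to f y"
proof (rule converges_toI_bound)
  fix p assume p: "p \<in> P"
  have "\<forall>N. p (f N - y) \<le> p (f N - g N) + p (g N - y)"
    using seminorm_diff_triangle[OF p] by blast
  moreover have "(\<lambda>N. p (f N - g N) + p (g N - y)) \<longlonglongrightarrow> 0"
    using g fg p unfolding converges_to_def by (intro tendsto_add_zero) auto
  ultimately show "\<exists>b. b \<longlonglongrightarrow> 0 \<and> (\<forall>N. p (f N - y) \<le> b N)" by blast
qed

lemma seminorm_limit_le:
  assumes "converges_to f x" "p \<in> P" "\<And>N. p (f N) \<le> B"
  shows "p x \<le> B"
proof -
  have "p x \<le> B + p (f N - x)" for N
    using seminorm_add[OF assms(2), of "f N" "x - f N"] assms(3)[of N]
      seminorm_diff_commute[OF assms(2), of x "f N"] by simp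
  moreover have "(\<lambda>N. B + p (f N - x)) \<longlonglongrightarrow> B + 0"
    using assms unfolding converges_to_def by (intro tendsto_intros) auto
  ultimately show ?thesis using LIMSEQ_le_const by fastforce
qed

lemma cauchy_imp_converges_to:
  assumes cauchy: "\<And>p e. p \<in> P \<Longrightarrow> e > 0 \<Longrightarrow> \<exists>N0. \<forall>N\<ge>N0. \<forall>M\<ge>N0. p (f N - f M) < e"
  shows "\<exists>x. converges_to f x"
proof -
  let ?F = "filtermap f sequentially"
  have "cauchy_filter_P P ?F" unfolding cauchy_filter_P_def
  proof (intro ballI allI impI)
    fix p e assume "p \<in> P" "(0::real) < e"
    then obtain N0 where N0: "\<forall>N\<ge>N0. \<forall>M\<ge>N0. p (f N - f M) < e" using cauchy by blast
    let ?Q = "\<lambda>x. \<exists>N\<ge>N0. x = f N"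
    have "eventually ?Q ?F" unfolding eventually_filtermap eventually_sequentially by blast
    then show "\<forall>\<^sub>F (x, y) in ?F \<times>\<^sub>F ?F. p (x - y) < e"
      unfolding eventually_prod_filter using N0 by (intro exI[of _ ?Q]) auto
  qed
  moreover have "?F \<noteq> bot" by (simp add: filtermap_bot_iff)
  ultimately obtain x where x: "converges_P P ?F x"
    using cauchy_filter_converges by blast
  have "converges_to f x" unfolding converges_to_def
  proof (intro ballI order_tendstoI)
    fix p and e :: real assume "p \<in> P"
    then show "e < 0 \<Longrightarrow> \<forall>\<^sub>F N in sequentially. e < p (f N - x)"
      using seminorm_nonneg by (simp add: less_le_trans)
    show "0 < e \<Longrightarrow> \<forall>\<^sub>F N in sequentially. p (f N - x) < e"
      using x \<open>p \<in> P\<close> unfolding converges_P_def eventually_filtermap by blast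
  qed
  then show ?thesis by blast
qed

end

section \<open>The algebra \<open>\<F>\<^sup>T(\<D>\<^sub>r\<^sup>n)\<close> of free power series\<close>

definition words_of_length :: "nat \<Rightarrow> nat \<Rightarrow> nat list set" where
  "words_of_length n d = {\<alpha>\<in>words n. length \<alpha> = d}"

definition words_shorter :: "nat \<Rightarrow> nat \<Rightarrow> nat list set" where
  "words_shorter n N = {\<alpha>\<in>words n. length \<alpha> < N}"

lemma finite_words_of_length: "finite (words_of_length n d)"
proof -
  have "words_of_length n d = {xs. set xs \<subseteq> {..<n} \<and> length xs = d}"
    unfolding words_of_length_def words_def by auto
  then show ?thesis using finite_lists_length_eq[of "{..<n}" d] by simp
qed

lemma words_shorter_eq_UN: "words_shorter n N = (\<Union>k<N. words_of_length n k)"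
  unfolding words_shorter_def words_of_length_def by auto

lemma finite_words_shorter: "finite (words_shorter n N)"
  by (simp add: words_shorter_eq_UN finite_words_of_length)

lemma sum_words_shorter:
  "(\<Sum>k<N. \<Sum>\<alpha>\<in>words_of_length n k. g \<alpha>) = (\<Sum>\<alpha>\<in>words_shorter n N. g \<alpha>)"
  unfolding words_shorter_eq_UN
  by (subst sum.UNION_disjoint)
    (auto simp: finite_words_of_length finite_words_of_length[unfolded words_of_length_def]
      words_of_length_def)

lemma words_append [simp]: "\<beta> @ \<delta> \<in> words n \<longleftrightarrow> \<beta> \<in> words n \<and> \<delta> \<in> words n"
  unfolding words_def by auto

lemma words_take: "\<gamma> \<in> words n \<Longrightarrow> take i \<gamma> \<in> words n"
  unfolding words_def by (auto dest: in_set_takeD)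

lemma words_drop: "\<gamma> \<in> words n \<Longrightarrow> drop i \<gamma> \<in> words n"
  unfolding words_def by (auto dest: in_set_dropD)

lemma sum_words_of_length_split:
  fixes g :: "nat list \<Rightarrow> nat list \<Rightarrow> 'b::comm_monoid_add"
  assumes "i \<le> k"
  shows "(\<Sum>\<gamma>\<in>words_of_length n k. g (take i \<gamma>) (drop i \<gamma>))
       = (\<Sum>\<beta>\<in>words_of_length n i. \<Sum>\<delta>\<in>words_of_length n (k - i). g \<beta> \<delta>)"
proof -
  let ?W = "words_of_length n i \<times> words_of_length n (k - i)"
  have bij: "bij_betw (\<lambda>(\<beta>, \<delta>). \<beta> @ \<delta>) ?W (words_of_length n k)"
  proof (rule bij_betwI[where g = "\<lambda>\<gamma>. (take i \<gamma>, drop i \<gamma>)"])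
    show "(\<lambda>(\<beta>, \<delta>). \<beta> @ \<delta>) \<in> ?W \<rightarrow> words_of_length n k"
      using assms by (auto simp: words_of_length_def)
    show "(\<lambda>\<gamma>. (take i \<gamma>, drop i \<gamma>)) \<in> words_of_length n k \<rightarrow> ?W"
      using assms by (auto simp: words_of_length_def words_take words_drop)
  qed (auto simp: words_of_length_def)
  have "(\<Sum>\<beta>\<in>words_of_length n i. \<Sum>\<delta>\<in>words_of_length n (k - i). g \<beta> \<delta>)
      = (\<Sum>(\<beta>, \<delta>)\<in>?W. g \<beta> \<delta>)"
    by (simp add: sum.cartesian_product)
  also have "\<dots> = (\<Sum>x\<in>?W. (\<lambda>\<gamma>. g (take i \<gamma>) (drop i \<gamma>)) ((\<lambda>(\<beta>, \<delta>). \<beta> @ \<delta>) x))"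
    by (rule sum.cong) (auto simp: words_of_length_def)
  also have "\<dots> = (\<Sum>\<gamma>\<in>words_of_length n k. g (take i \<gamma>) (drop i \<gamma>))"
    by (rule sum.reindex_bij_betw[OF bij])
  finally show ?thesis by simp
qed

lemma word_prod_Nil [simp]: "word_prod a [] = 1"
  unfolding word_prod_def by simp

lemma word_prod_Cons: "word_prod a (i # \<beta>) = a ! i * word_prod a \<beta>"
  unfolding word_prod_def by simp

lemma word_prod_append: "word_prod a (\<beta> @ \<delta>) = word_prod a \<beta> * word_prod a \<delta>"
  unfolding word_prod_def by simp

lemma FT_outside_words: "c \<in> FT n r \<Longrightarrow> \<alpha> \<notin> words n \<Longrightarrow> c \<alpha> = 0"
  unfolding FT_def by auto

lemma FT_weighted_summable:
  "c \<in> FT n r \<Longrightarrow> 0 < \<rho> \<Longrightarrow> \<rho> < r \<Longrightarrow> (\<lambda>\<alpha>. cmod (c \<alpha>) * \<rho> ^ length \<alpha>) summable_on words n"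
  unfolding FT_def by auto

lemma ft_norm_nonneg: "0 \<le> \<rho> \<Longrightarrow> 0 \<le> ft_norm n \<rho> c"
  unfolding ft_norm_def by (intro infsum_nonneg) auto

definition ft_degree_norm :: "nat \<Rightarrow> real \<Rightarrow> (nat list \<Rightarrow> complex) \<Rightarrow> nat \<Rightarrow> real" where
  "ft_degree_norm n \<rho> c k = (\<Sum>\<alpha>\<in>words_of_length n k. cmod (c \<alpha>) * \<rho> ^ k)"

lemma ft_degree_norm_nonneg: "0 \<le> \<rho> \<Longrightarrow> 0 \<le> ft_degree_norm n \<rho> c k"
  unfolding ft_degree_norm_def by (intro sum_nonneg) auto

lemma sum_ft_degree_norm: 
  "(\<Sum>k<N. ft_degree_norm n \<rho> c k) = (\<Sum>\<alpha>\<in>words_shorter n N. cmod (c \<alpha>) * \<rho> ^ length \<alpha>)"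
  unfolding ft_degree_norm_def sum_words_shorter[symmetric]
  by (intro sum.cong refl) (auto simp: words_of_length_def)

lemma sum_ft_degree_norm_le_ft_norm:
  assumes "c \<in> FT n r" "0 < \<rho>" "\<rho> < r"
  shows "(\<Sum>k<N. ft_degree_norm n \<rho> c k) \<le> ft_norm n \<rho> c"
  unfolding sum_ft_degree_norm ft_norm_def using assms
  by (intro finite_sum_le_infsum FT_weighted_summable)
    (auto simp: finite_words_shorter[unfolded words_shorter_def] words_shorter_def)

lemma summable_ft_degree_norm:
  "c \<in> FT n r \<Longrightarrow> 0 < \<rho> \<Longrightarrow> \<rho> < r \<Longrightarrow> summable (ft_degree_norm n \<rho> c)"
  using sum_ft_degree_norm_le_ft_norm ft_degree_norm_nonneg
  by (intro summableI_nonneg_bounded) auto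

lemma FT_finite_support:
  assumes "\<And>\<alpha>. \<alpha> \<notin> words n \<Longrightarrow> c \<alpha> = 0" "finite {\<alpha>. c \<alpha> \<noteq> 0}"
  shows "c \<in> FT n r"
  unfolding FT_def mem_Collect_eq
proof (intro conjI allI impI)
  fix \<rho> :: real
  have "(\<lambda>\<alpha>. cmod (c \<alpha>) * \<rho> ^ length \<alpha>) summable_on {\<alpha>. c \<alpha> \<noteq> 0}"
    using assms(2) by (rule summable_on_finite)
  then show "(\<lambda>\<alpha>. cmod (c \<alpha>) * \<rho> ^ length \<alpha>) summable_on words n"
    by (rule summable_on_cong_neutral[THEN iffD1, rotated -1]) (use assms(1) in auto)
qed (use assms in auto)

lemma FT_dominated:
  assumes "d \<in> FT n r" "\<And>\<alpha>. \<alpha> \<notin> words n \<Longrightarrow> c \<alpha> = 0"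
    and "\<And>\<rho> \<alpha>. 0 < \<rho> \<Longrightarrow> \<rho> < r \<Longrightarrow> \<alpha> \<in> words n \<Longrightarrow>
      cmod (c \<alpha>) * \<rho> ^ length \<alpha> \<le> cmod (d \<alpha>) * \<rho> ^ length \<alpha>"
  shows "c \<in> FT n r"
  unfolding FT_def mem_Collect_eq
proof (intro conjI allI impI)
  fix \<rho> :: real assume "0 < \<rho> \<and> \<rho> < r"
  then show "(\<lambda>\<alpha>. cmod (c \<alpha>) * \<rho> ^ length \<alpha>) summable_on words n"
    using assms by (intro summable_on_comparison_test[OF FT_weighted_summable[OF assms(1)]]) auto
qed (use assms in auto)

lemma FT_add:
  assumes c: "c \<in> FT n r" and d: "d \<in> FT n r"
  shows "ft_add c d \<in> FT n r"
  unfolding FT_def mem_Collect_eq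
proof (intro conjI allI impI)
  fix \<rho> :: real assume \<rho>: "0 < \<rho> \<and> \<rho> < r"
  let ?w = "\<lambda>c \<alpha>. cmod (c \<alpha>) * \<rho> ^ length \<alpha>"
  show "?w (ft_add c d) summable_on words n"
  proof (rule summable_on_comparison_test)
    show "(\<lambda>\<alpha>. ?w c \<alpha> + ?w d \<alpha>) summable_on words n"
      using c d \<rho> by (intro summable_on_add FT_weighted_summable) auto
    show "?w (ft_add c d) \<alpha> \<le> ?w c \<alpha> + ?w d \<alpha>" for \<alpha>
      using \<rho> norm_triangle_ineq[of "c \<alpha>" "d \<alpha>"]
      by (simp add: ft_add_def distrib_right[symmetric] mult_right_mono)
  qed (use \<rho> in auto)
qed (use c d in \<open>simp add: ft_add_def FT_outside_words\<close>)

lemma FT_smul: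
  assumes c: "c \<in> FT n r"
  shows "ft_smul z c \<in> FT n r"
  unfolding FT_def mem_Collect_eq
proof (intro conjI allI impI)
  fix \<rho> :: real assume "0 < \<rho> \<and> \<rho> < r"
  then have "(\<lambda>\<alpha>. cmod z * (cmod (c \<alpha>) * \<rho> ^ length \<alpha>)) summable_on words n"
    using c by (intro summable_on_cmult_right FT_weighted_summable) auto
  then show "(\<lambda>\<alpha>. cmod (ft_smul z c \<alpha>) * \<rho> ^ length \<alpha>) summable_on words n"
    by (simp add: ft_smul_def norm_mult mult.assoc)
qed (use c in \<open>simp add: ft_smul_def FT_outside_words\<close>)

definition ft_restrict :: "(nat list \<Rightarrow> complex) \<Rightarrow> nat list set \<Rightarrow> nat list \<Rightarrow> complex" where
  "ft_restrict c S = (\<lambda>\<beta>. if \<beta> \<in> S then c \<beta> else 0)"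

lemma FT_restrict: "c \<in> FT n r \<Longrightarrow> ft_restrict c S \<in> FT n r"
  by (rule FT_dominated) (auto simp: ft_restrict_def FT_outside_words)

lemma ft_add_restrict_Compl: "ft_add (ft_restrict c S) (ft_restrict c (- S)) = c"
  by (auto simp: ft_add_def ft_restrict_def)

definition ft_monomial :: "nat list \<Rightarrow> nat list \<Rightarrow> complex" where
  "ft_monomial \<alpha> = (\<lambda>\<beta>. if \<beta> = \<alpha> then 1 else 0)"

lemma ft_monomial_FT: "\<alpha> \<in> words n \<Longrightarrow> ft_monomial \<alpha> \<in> FT n r"
  by (rule FT_finite_support) (auto simp: ft_monomial_def)

lemma ft_gen_eq_monomial: "ft_gen i = ft_monomial [i]"
  unfolding ft_gen_def ft_monomial_def by simp

lemma ft_one_eq_monomial: "ft_one = ft_monomial []"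
  unfolding ft_one_def ft_monomial_def by simp

lemma ft_gen_FT: "i < n \<Longrightarrow> ft_gen i \<in> FT n r"
  unfolding ft_gen_eq_monomial by (rule ft_monomial_FT) (simp add: words_def)

lemma ft_one_FT: "ft_one \<in> FT n r"
  unfolding ft_one_eq_monomial by (rule ft_monomial_FT) (simp add: words_def)

lemma ft_norm_monomial: "\<alpha> \<in> words n \<Longrightarrow> ft_norm n \<rho> (ft_monomial \<alpha>) = \<rho> ^ length \<alpha>"
proof -
  assume "\<alpha> \<in> words n"
  then have "ft_norm n \<rho> (ft_monomial \<alpha>)
      = (\<Sum>\<^sub>\<infinity>\<beta>\<in>{\<alpha>}. cmod (ft_monomial \<alpha> \<beta>) * \<rho> ^ length \<beta>)"
    unfolding ft_norm_def by (intro infsum_cong_neutral) (auto simp: ft_monomial_def)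
  then show ?thesis by (simp add: ft_monomial_def)
qed

lemma ft_mult_gen_monomial: "ft_mult (ft_gen i) (ft_monomial \<beta>) = ft_monomial (i # \<beta>)"
proof
  fix \<gamma>
  show "ft_mult (ft_gen i) (ft_monomial \<beta>) \<gamma> = ft_monomial (i # \<beta>) \<gamma>"
  proof (cases \<gamma>)
    case Nil
    then show ?thesis by (simp add: ft_mult_def ft_gen_def ft_monomial_def)
  next
    case (Cons x \<gamma>')
    have "ft_mult (ft_gen i) (ft_monomial \<beta>) \<gamma>
        = (\<Sum>k\<le>length \<gamma>'. ft_gen i (x # take k \<gamma>') * ft_monomial \<beta> (drop k \<gamma>'))"
      unfolding ft_mult_def Cons
      by (simp only: length_Cons sum.atMost_Suc_shift) (simp add: ft_gen_def)
    also have "\<dots> = (\<Sum>k\<le>length \<gamma>'. if k = 0 then ft_gen i [x] * ft_monomial \<beta> \<gamma>' else 0)"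
      by (intro sum.cong refl) (auto simp: ft_gen_def)
    also have "\<dots> = ft_monomial (i # \<beta>) \<gamma>"
      by (simp add: Cons ft_gen_def ft_monomial_def)
    finally show ?thesis .
  qed
qed

lemma ft_degree_norm_mult:
  assumes "0 \<le> \<rho>"
  shows "ft_degree_norm n \<rho> (ft_mult c d) k
    \<le> (\<Sum>i\<le>k. ft_degree_norm n \<rho> c i * ft_degree_norm n \<rho> d (k - i))"
proof -
  define w where "w c \<alpha> j = cmod (c \<alpha>) * \<rho> ^ j" for c :: "nat list \<Rightarrow> complex" and \<alpha> j
  have "ft_degree_norm n \<rho> (ft_mult c d) k
      \<le> (\<Sum>\<gamma>\<in>words_of_length n k. \<Sum>i\<le>k. w c (take i \<gamma>) i * w d (drop i \<gamma>) (k - i))"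
    unfolding ft_degree_norm_def
  proof (rule sum_mono)
    fix \<gamma> assume "\<gamma> \<in> words_of_length n k"
    then have "ft_mult c d \<gamma> = (\<Sum>i\<le>k. c (take i \<gamma>) * d (drop i \<gamma>))"
      by (simp add: ft_mult_def words_of_length_def)
    then have "cmod (ft_mult c d \<gamma>) * \<rho> ^ k \<le> (\<Sum>i\<le>k. cmod (c (take i \<gamma>) * d (drop i \<gamma>))) * \<rho> ^ k"
      using assms by (simp add: mult_right_mono norm_sum)
    also have "\<dots> = (\<Sum>i\<le>k. w c (take i \<gamma>) i * w d (drop i \<gamma>) (k - i))"
      unfolding sum_distrib_right
    proof (intro sum.cong refl)
      fix i assume "i \<in> {..k}"
      then have "\<rho> ^ k = \<rho> ^ i * \<rho> ^ (k - i)" by (simp flip: power_add)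
      then show "cmod (c (take i \<gamma>) * d (drop i \<gamma>)) * \<rho> ^ k
          = w c (take i \<gamma>) i * w d (drop i \<gamma>) (k - i)"
        by (simp add: w_def norm_mult)
    qed
    finally show "cmod (ft_mult c d \<gamma>) * \<rho> ^ k
        \<le> (\<Sum>i\<le>k. w c (take i \<gamma>) i * w d (drop i \<gamma>) (k - i))" .
  qed
  also have "\<dots> = (\<Sum>i\<le>k. \<Sum>\<gamma>\<in>words_of_length n k. w c (take i \<gamma>) i * w d (drop i \<gamma>) (k - i))"
    by (rule sum.swap)
  also have "\<dots> = (\<Sum>i\<le>k. ft_degree_norm n \<rho> c i * ft_degree_norm n \<rho> d (k - i))"
  proof (intro sum.cong refl)
    fix i assume "i \<in> {..k}"
    then have "(\<Sum>\<gamma>\<in>words_of_length n k. w c (take i \<gamma>) i * w d (drop i \<gamma>) (k - i))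
        = (\<Sum>\<beta>\<in>words_of_length n i. \<Sum>\<delta>\<in>words_of_length n (k - i). w c \<beta> i * w d \<delta> (k - i))"
      by (intro sum_words_of_length_split) simp
    then show "(\<Sum>\<gamma>\<in>words_of_length n k. w c (take i \<gamma>) i * w d (drop i \<gamma>) (k - i))
        = ft_degree_norm n \<rho> c i * ft_degree_norm n \<rho> d (k - i)"
      by (simp add: ft_degree_norm_def w_def sum_product)
  qed
  finally show ?thesis .
qed

lemma ft_mult_outside_words:
  assumes "c \<in> FT n r" "d \<in> FT n r" "\<gamma> \<notin> words n"
  shows "ft_mult c d \<gamma> = 0"
  unfolding ft_mult_def
proof (rule sum.neutral, rule ballI)
  fix k
  have "take k \<gamma> \<notin> words n \<or> drop k \<gamma> \<notin> words n"
    using assms(3) words_append[of "take k \<gamma>" "drop k \<gamma>" n] by auto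
  then show "c (take k \<gamma>) * d (drop k \<gamma>) = 0" using assms(1,2) FT_outside_words by auto
qed

lemma FT_mult:
  assumes c: "c \<in> FT n r" and d: "d \<in> FT n r"
  shows "ft_mult c d \<in> FT n r"
  unfolding FT_def mem_Collect_eq
proof (intro conjI allI impI)
  fix \<rho> :: real assume \<rho>: "0 < \<rho> \<and> \<rho> < r"
  let ?h = "\<lambda>\<alpha>. cmod (ft_mult c d \<alpha>) * \<rho> ^ length \<alpha>"
  show "?h summable_on words n"
  proof (rule nonneg_bdd_above_summable_on)
    show "bdd_above (sum ?h ` {F. F \<subseteq> words n \<and> finite F})"
    proof (rule bdd_aboveI2)
      fix F assume "F \<in> {F. F \<subseteq> words n \<and> finite F}"
      then obtain N where "F \<subseteq> words_shorter n N"
        using finite_nat_set_iff_bounded[of "length ` F"] by (auto simp: words_shorter_def)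
      then have "sum ?h F \<le> sum ?h (words_shorter n N)"
        using \<rho> by (intro sum_mono2 finite_words_shorter) auto
      also have "\<dots> = (\<Sum>k<N. ft_degree_norm n \<rho> (ft_mult c d) k)"
        by (rule sum_ft_degree_norm[symmetric])
      also have "\<dots> \<le> (\<Sum>k<N. \<Sum>i\<le>k. ft_degree_norm n \<rho> c i * ft_degree_norm n \<rho> d (k - i))"
        using \<rho> by (intro sum_mono ft_degree_norm_mult) auto
      also have "\<dots> \<le> (\<Sum>i<N. ft_degree_norm n \<rho> c i) * (\<Sum>j<N. ft_degree_norm n \<rho> d j)"
        using \<rho> by (intro sum_triangle_le_product ft_degree_norm_nonneg) auto
      also have "\<dots> \<le> ft_norm n \<rho> c * ft_norm n \<rho> d"
        using \<rho> sum_ft_degree_norm_le_ft_norm[OF c] sum_ft_degree_norm_le_ft_norm[OF d]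
        by (intro mult_mono) (auto intro!: sum_nonneg ft_degree_norm_nonneg ft_norm_nonneg)
      finally show "sum ?h F \<le> ft_norm n \<rho> c * ft_norm n \<rho> d" .
    qed
  qed (use \<rho> in auto)
qed (use ft_mult_outside_words[OF c d] in blast)

lemma ft_norm_tail_le:
  assumes c: "c \<in> FT n r" and \<rho>: "0 < \<rho>" "\<rho> < \<rho>'" "\<rho>' < r"
  shows "ft_norm n \<rho> (ft_restrict c (- words_shorter n N)) \<le> (\<rho> / \<rho>') ^ N * ft_norm n \<rho>' c"
proof -
  let ?q = "\<rho> / \<rho>'"
  have "ft_norm n \<rho> (ft_restrict c (- words_shorter n N))
      \<le> (\<Sum>\<^sub>\<infinity>\<beta>\<in>words n. ?q ^ N * (cmod (c \<beta>) * \<rho>' ^ length \<beta>))"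
    unfolding ft_norm_def
  proof (rule infsum_mono)
    show "(\<lambda>\<beta>. cmod (ft_restrict c (- words_shorter n N) \<beta>) * \<rho> ^ length \<beta>) summable_on words n"
      using FT_weighted_summable[OF FT_restrict[OF c]] \<rho> by simp
    show "(\<lambda>\<beta>. ?q ^ N * (cmod (c \<beta>) * \<rho>' ^ length \<beta>)) summable_on words n"
      using FT_weighted_summable[OF c, of \<rho>'] \<rho> by (intro summable_on_cmult_right) simp
    fix \<beta> assume "\<beta> \<in> words n"
    show "cmod (ft_restrict c (- words_shorter n N) \<beta>) * \<rho> ^ length \<beta>
        \<le> ?q ^ N * (cmod (c \<beta>) * \<rho>' ^ length \<beta>)"
    proof (cases "length \<beta> < N")
      case True
      then show ?thesis using \<open>\<beta> \<in> words n\<close> \<rho> by (simp add: ft_restrict_def words_shorter_def)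
    next
      case False
      have "\<rho> ^ length \<beta> = ?q ^ length \<beta> * \<rho>' ^ length \<beta>"
        using \<rho> by (simp add: power_divide)
      also have "\<dots> \<le> ?q ^ N * \<rho>' ^ length \<beta>"
        using \<rho> False by (intro mult_right_mono power_decreasing) auto
      finally have "cmod (c \<beta>) * \<rho> ^ length \<beta> \<le> cmod (c \<beta>) * (?q ^ N * \<rho>' ^ length \<beta>)"
        by (rule mult_left_mono) simp
      then show ?thesis
        using False by (simp add: ft_restrict_def words_shorter_def mult.left_commute)
    qed
  qed
  also have "\<dots> = ?q ^ N * ft_norm n \<rho>' c"
    unfolding ft_norm_def by (rule infsum_cmult_right')
  finally show ?thesis .
qed

section \<open>Strict spectral contractivity as a geometric bound\<close>

definition word_sup :: "nat \<Rightarrow> ('a::monoid_mult \<Rightarrow> real) \<Rightarrow> 'a list \<Rightarrow> nat \<Rightarrow> real" where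
  "word_sup n p a d = Max (insert 0 {p (word_prod a \<alpha>) | \<alpha>. \<alpha> \<in> words n \<and> length \<alpha> = d})"

lemma ssc_iff_word_sup: "ssc P n r a \<longleftrightarrow> (\<forall>p\<in>P. lim (\<lambda>d. root d (word_sup n p a d)) < r)"
  unfolding ssc_def word_sup_def ..

lemma finite_word_values:
  "finite (insert 0 {p (word_prod a \<alpha>) | \<alpha>. \<alpha> \<in> words n \<and> length \<alpha> = d})"
proof -
  have "{p (word_prod a \<alpha>) | \<alpha>. \<alpha> \<in> words n \<and> length \<alpha> = d}
      = (\<lambda>\<alpha>. p (word_prod a \<alpha>)) ` words_of_length n d"
    unfolding words_of_length_def by auto
  then show ?thesis by (simp add: finite_words_of_length)
qed

lemma word_sup_ge: "\<alpha> \<in> words n \<Longrightarrow> p (word_prod a \<alpha>) \<le> word_sup n p a (length \<alpha>)"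
  unfolding word_sup_def by (rule Max_ge[OF finite_word_values]) auto

lemma word_sup_nonneg: "0 \<le> word_sup n p a d"
  unfolding word_sup_def by (rule Max_ge[OF finite_word_values]) auto

lemma word_sup_le:
  "0 \<le> B \<Longrightarrow> (\<And>\<alpha>. \<alpha> \<in> words n \<Longrightarrow> length \<alpha> = d \<Longrightarrow> p (word_prod a \<alpha>) \<le> B) \<Longrightarrow> word_sup n p a d \<le> B"
  unfolding word_sup_def by (rule Max.boundedI[OF finite_word_values]) auto

context arens_michael
begin

lemma word_sup_submult:
  assumes p: "p \<in> P"
  shows "word_sup n p a (i + j) \<le> word_sup n p a i * word_sup n p a j"
proof (rule word_sup_le)
  fix \<alpha> assume \<alpha>: "\<alpha> \<in> words n" "length \<alpha> = i + j"
  have "p (word_prod a \<alpha>) \<le> p (word_prod a (take i \<alpha>)) * p (word_prod a (drop i \<alpha>))"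
    using seminorm_mult[OF p, of "word_prod a (take i \<alpha>)" "word_prod a (drop i \<alpha>)"]
    by (simp flip: word_prod_append)
  also have "\<dots> \<le> word_sup n p a i * word_sup n p a j"
    using word_sup_ge[OF words_take[OF \<alpha>(1)], of p a i]
      word_sup_ge[OF words_drop[OF \<alpha>(1)], of p a i]
      \<alpha>(2) seminorm_nonneg[OF p] word_sup_nonneg
    by (intro mult_mono) auto
  finally show "p (word_prod a \<alpha>) \<le> word_sup n p a i * word_sup n p a j" .
qed (intro mult_nonneg_nonneg word_sup_nonneg)

lemma root_word_sup_tendsto:
  "p \<in> P \<Longrightarrow> (\<lambda>d. root d (word_sup n p a d)) \<longlonglongrightarrow> lim (\<lambda>d. root d (word_sup n p a d))"
  using submultiplicative_root_convergent[of "word_sup n p a", OF word_sup_nonneg word_sup_submult]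
  by (simp add: convergent_LIMSEQ_iff)

lemma lim_root_word_sup_less_imp_geometric_bound:
  assumes p: "p \<in> P" and less: "lim (\<lambda>d. root d (word_sup n p a d)) < r"
  obtains \<rho> C where "0 < \<rho>" "\<rho> < r" "0 \<le> C"
    "\<And>\<alpha>. \<alpha> \<in> words n \<Longrightarrow> p (word_prod a \<alpha>) \<le> C * \<rho> ^ length \<alpha>"
proof -
  let ?x = "\<lambda>d. root d (word_sup n p a d)"
  have lim: "?x \<longlonglongrightarrow> lim ?x" using root_word_sup_tendsto[OF p] .
  have "0 \<le> lim ?x"
    by (rule LIMSEQ_le_const[OF lim]) (auto intro: real_root_ge_zero word_sup_nonneg)
  define \<rho> where "\<rho> = (lim ?x + r) / 2"
  have \<rho>: "0 < \<rho>" "lim ?x < \<rho>" "\<rho> < r" using \<open>0 \<le> lim ?x\<close> less unfolding \<rho>_def by auto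
  then have "\<forall>\<^sub>F d in sequentially. ?x d < \<rho>" using lim by (intro order_tendstoD(2))
  then obtain C where "0 \<le> C" "\<And>d. word_sup n p a d \<le> C * \<rho> ^ d"
    using root_eventually_less_imp_geometric_bound[of "word_sup n p a", OF word_sup_nonneg \<rho>(1)]
    by blast
  then show ?thesis
    using that[OF \<rho>(1,3)] word_sup_ge order_trans by blast
qed

lemma geometric_bound_imp_lim_root_word_sup_less:
  assumes p: "p \<in> P" and \<rho>: "0 < \<rho>" "\<rho> < r" and "0 \<le> C"
    and bound: "\<And>\<alpha>. \<alpha> \<in> words n \<Longrightarrow> p (word_prod a \<alpha>) \<le> C * \<rho> ^ length \<alpha>"
  shows "lim (\<lambda>d. root d (word_sup n p a d)) < r"
proof -
  let ?x = "\<lambda>d. root d (word_sup n p a d)"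
  have "word_sup n p a d \<le> C * \<rho> ^ d" for d
    using bound \<open>0 \<le> C\<close> \<rho> by (intro word_sup_le) auto
  then have "\<forall>\<^sub>F d in sequentially. ?x d < (\<rho> + r) / 2"
    using \<rho> by (intro geometric_bound_imp_root_eventually_less[OF word_sup_nonneg]) auto
  then have "lim ?x \<le> (\<rho> + r) / 2"
    by (intro tendsto_upperbound[OF root_word_sup_tendsto[OF p]]) (auto elim: eventually_mono)
  then show ?thesis using \<rho> by (simp add: field_simps)
qed

lemma ssc_iff_geometric_bound:
  "ssc P n r a \<longleftrightarrow> (\<forall>p\<in>P. \<exists>\<rho> C. 0 < \<rho> \<and> \<rho> < r \<and> 0 \<le> C \<and>
      (\<forall>\<alpha>\<in>words n. p (word_prod a \<alpha>) \<le> C * \<rho> ^ length \<alpha>))"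
  unfolding ssc_iff_word_sup
proof (intro ball_cong refl iffI)
  fix p assume "p \<in> P"
  then show "lim (\<lambda>d. root d (word_sup n p a d)) < r \<Longrightarrow> \<exists>\<rho> C. 0 < \<rho> \<and> \<rho> < r \<and> 0 \<le> C \<and>
      (\<forall>\<alpha>\<in>words n. p (word_prod a \<alpha>) \<le> C * \<rho> ^ length \<alpha>)"
    by (elim lim_root_word_sup_less_imp_geometric_bound) auto
  show "\<exists>\<rho> C. 0 < \<rho> \<and> \<rho> < r \<and> 0 \<le> C \<and> (\<forall>\<alpha>\<in>words n. p (word_prod a \<alpha>) \<le> C * \<rho> ^ length \<alpha>)
      \<Longrightarrow> lim (\<lambda>d. root d (word_sup n p a d)) < r"
    using geometric_bound_imp_lim_root_word_sup_less[OF \<open>p \<in> P\<close>] by blast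
qed

end

section \<open>The evaluation homomorphism of a strictly contractive tuple\<close>

locale ssc_tuple = arens_michael smul P for smul :: "complex \<Rightarrow> 'a::ring_1 \<Rightarrow> 'a" and P +
  fixes n :: nat and r :: real and a :: "'a list"
  assumes ssc: "ssc P n r a"
begin

definition degree_part :: "nat \<Rightarrow> (nat list \<Rightarrow> complex) \<Rightarrow> 'a" where
  "degree_part k c = (\<Sum>\<alpha>\<in>words_of_length n k. smul (c \<alpha>) (word_prod a \<alpha>))"

definition partial_eval :: "nat \<Rightarrow> (nat list \<Rightarrow> complex) \<Rightarrow> 'a" where
  "partial_eval N c = (\<Sum>k<N. degree_part k c)"

definition series_eval :: "(nat list \<Rightarrow> complex) \<Rightarrow> 'a" where
  "series_eval = restrict (\<lambda>c. THE x. converges_to (\<lambda>N. partial_eval N c) x) (FT n r)"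

lemma geometric_word_bound:
  assumes "p \<in> P"
  obtains \<rho> C where "0 < \<rho>" "\<rho> < r" "0 \<le> C"
    "\<And>\<alpha>. \<alpha> \<in> words n \<Longrightarrow> p (word_prod a \<alpha>) \<le> C * \<rho> ^ length \<alpha>"
  using ssc assms that unfolding ssc_iff_geometric_bound by blast

lemma seminorm_degree_part_le:
  assumes p: "p \<in> P" and bound: "\<And>\<alpha>. \<alpha> \<in> words n \<Longrightarrow> p (word_prod a \<alpha>) \<le> C * \<rho> ^ length \<alpha>"
  shows "p (degree_part k c) \<le> C * ft_degree_norm n \<rho> c k"
proof -
  have "p (degree_part k c) \<le> (\<Sum>\<alpha>\<in>words_of_length n k. p (smul (c \<alpha>) (word_prod a \<alpha>)))"
    unfolding degree_part_def by (rule seminorm_sum[OF p])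
  also have "\<dots> = (\<Sum>\<alpha>\<in>words_of_length n k. cmod (c \<alpha>) * p (word_prod a \<alpha>))"
    by (simp add: seminorm_smul[OF p])
  also have "\<dots> \<le> (\<Sum>\<alpha>\<in>words_of_length n k. cmod (c \<alpha>) * (C * \<rho> ^ k))"
    using bound by (intro sum_mono mult_left_mono) (auto simp: words_of_length_def)
  also have "\<dots> = C * ft_degree_norm n \<rho> c k"
    unfolding ft_degree_norm_def by (simp add: sum_distrib_left mult_ac)
  finally show ?thesis .
qed

lemma seminorm_partial_eval_diff_le:
  assumes p: "p \<in> P" and bound: "\<And>\<alpha>. \<alpha> \<in> words n \<Longrightarrow> p (word_prod a \<alpha>) \<le> C * \<rho> ^ length \<alpha>"
    and "N \<le> M"
  shows "p (partial_eval M c - partial_eval N c) \<le> C * (\<Sum>k\<in>{N..<M}. ft_degree_norm n \<rho> c k)"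
proof -
  have "partial_eval M c - partial_eval N c = (\<Sum>k\<in>{N..<M}. degree_part k c)"
    unfolding partial_eval_def
    using sum.atLeastLessThan_concat[of 0 N M "\<lambda>k. degree_part k c"] \<open>N \<le> M\<close>
    by (simp add: atLeast0LessThan algebra_simps)
  then have "p (partial_eval M c - partial_eval N c) \<le> (\<Sum>k\<in>{N..<M}. p (degree_part k c))"
    using seminorm_sum[OF p] by simp
  also have "\<dots> \<le> C * (\<Sum>k\<in>{N..<M}. ft_degree_norm n \<rho> c k)"
    unfolding sum_distrib_left by (intro sum_mono seminorm_degree_part_le[OF p bound])
  finally show ?thesis .
qed

lemma partial_eval_converges:
  assumes c: "c \<in> FT n r"
  shows "\<exists>x. converges_to (\<lambda>N. partial_eval N c) x"
proof (rule cauchy_imp_converges_to)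
  fix p and e :: real assume p: "p \<in> P" and "0 < e"
  obtain \<rho> C where \<rho>: "0 < \<rho>" "\<rho> < r" "0 \<le> C"
    and bound: "\<And>\<alpha>. \<alpha> \<in> words n \<Longrightarrow> p (word_prod a \<alpha>) \<le> C * \<rho> ^ length \<alpha>"
    using geometric_word_bound[OF p] by blast
  have "0 < e / (C + 1)" using \<open>0 < e\<close> \<rho>(3) by simp
  then obtain N0 where N0: "\<And>N M. N \<ge> N0 \<Longrightarrow> norm (\<Sum>k\<in>{N..<M}. ft_degree_norm n \<rho> c k) < e / (C + 1)"
    using summable_ft_degree_norm[OF c \<rho>(1,2)] unfolding summable_Cauchy by blast
  have close: "p (partial_eval M c - partial_eval N c) < e" if "N0 \<le> N" "N \<le> M" for N M
  proof -
    have "p (partial_eval M c - partial_eval N c) \<le> C * (\<Sum>k\<in>{N..<M}. ft_degree_norm n \<rho> c k)"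
      by (rule seminorm_partial_eval_diff_le[OF p bound \<open>N \<le> M\<close>])
    also have "\<dots> \<le> C * (e / (C + 1))"
      using N0[OF \<open>N0 \<le> N\<close>, of M] \<rho>(3) by (intro mult_left_mono) auto
    also have "\<dots> < e" using \<open>0 < e\<close> \<rho>(3) by (simp add: field_simps)
    finally show ?thesis .
  qed
  have "p (partial_eval N c - partial_eval M c) < e" if "N0 \<le> N" "N0 \<le> M" for N M
    using close[of N M] close[of M N] that seminorm_diff_commute[OF p, of "partial_eval N c"]
    by (cases "N \<le> M") auto
  then show "\<exists>N0. \<forall>N\<ge>N0. \<forall>M\<ge>N0. p (partial_eval N c - partial_eval M c) < e" by blast
qed

lemma series_eval_converges:
  assumes "c \<in> FT n r"
  shows "converges_to (\<lambda>N. partial_eval N c) (series_eval c)"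
proof -
  obtain x where x: "converges_to (\<lambda>N. partial_eval N c) x"
    using partial_eval_converges[OF assms] by blast
  then have "series_eval c = x"
    unfolding series_eval_def using assms converges_to_unique by auto
  then show ?thesis using x by simp
qed

lemma series_eval_eqI: "c \<in> FT n r \<Longrightarrow> converges_to (\<lambda>N. partial_eval N c) x \<Longrightarrow> series_eval c = x"
  using series_eval_converges converges_to_unique by blast

lemma degree_part_add: "degree_part k (ft_add c d) = degree_part k c + degree_part k d"
  unfolding degree_part_def ft_add_def smul_add_left by (rule sum.distrib)

lemma partial_eval_add: "partial_eval N (ft_add c d) = partial_eval N c + partial_eval N d"
  unfolding partial_eval_def degree_part_add by (rule sum.distrib)

lemma partial_eval_smul: "partial_eval N (ft_smul z c) = smul z (partial_eval N c)"
  unfolding partial_eval_def degree_part_def ft_smul_def smul_sum_right smul_assoc ..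

lemma series_eval_add:
  "c \<in> FT n r \<Longrightarrow> d \<in> FT n r \<Longrightarrow> series_eval (ft_add c d) = series_eval c + series_eval d"
  by (rule series_eval_eqI[OF FT_add])
    (simp_all add: partial_eval_add converges_to_add series_eval_converges)

lemma series_eval_smul: "c \<in> FT n r \<Longrightarrow> series_eval (ft_smul z c) = smul z (series_eval c)"
  by (rule series_eval_eqI[OF FT_smul])
    (simp_all add: partial_eval_smul converges_to_smul series_eval_converges)

lemma series_eval_monomial:
  assumes "\<beta> \<in> words n"
  shows "series_eval (ft_monomial \<beta>) = word_prod a \<beta>"
proof (rule series_eval_eqI[OF ft_monomial_FT[OF assms]])
  have "degree_part k (ft_monomial \<beta>)
      = (\<Sum>\<alpha>\<in>words_of_length n k. if \<alpha> = \<beta> then word_prod a \<alpha> else 0)" for k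
    unfolding degree_part_def ft_monomial_def by (intro sum.cong refl) (simp add: smul_one)
  also have "\<dots> k = (if \<beta> \<in> words_of_length n k then word_prod a \<beta> else 0)" for k
    by (rule sum.delta[OF finite_words_of_length])
  finally have "degree_part k (ft_monomial \<beta>) = (if k = length \<beta> then word_prod a \<beta> else 0)" for k
    using assms by (simp add: words_of_length_def)
  then have "partial_eval N (ft_monomial \<beta>) = word_prod a \<beta>" if "N \<ge> Suc (length \<beta>)" for N
    using that by (simp add: partial_eval_def)
  then show "converges_to (\<lambda>N. partial_eval N (ft_monomial \<beta>)) (word_prod a \<beta>)"
    by (rule converges_to_eventually_const)
qed

lemma seminorm_series_eval_le:
  assumes p: "p \<in> P"
  shows "\<exists>\<rho>. 0 < \<rho> \<and> \<rho> < r \<and> (\<exists>C. \<forall>c\<in>FT n r. p (series_eval c) \<le> C * ft_norm n \<rho> c)"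
proof -
  obtain \<rho> C where \<rho>: "0 < \<rho>" "\<rho> < r" "0 \<le> C"
    and bound: "\<And>\<alpha>. \<alpha> \<in> words n \<Longrightarrow> p (word_prod a \<alpha>) \<le> C * \<rho> ^ length \<alpha>"
    using geometric_word_bound[OF p] by blast
  have "p (series_eval c) \<le> C * ft_norm n \<rho> c" if c: "c \<in> FT n r" for c
  proof (rule seminorm_limit_le[OF series_eval_converges[OF c] p])
    fix N
    have "p (partial_eval N c) \<le> C * (\<Sum>k\<in>{0..<N}. ft_degree_norm n \<rho> c k)"
      using seminorm_partial_eval_diff_le[OF p bound, of 0 N c] by (simp add: partial_eval_def)
    also have "\<dots> \<le> C * ft_norm n \<rho> c"
      using sum_ft_degree_norm_le_ft_norm[OF c \<rho>(1,2)] \<rho>(3)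
      by (intro mult_left_mono) (auto simp: atLeast0LessThan)
    finally show "p (partial_eval N c) \<le> C * ft_norm n \<rho> c" .
  qed
  then show ?thesis using \<rho> by blast
qed

lemma degree_part_mult:
  "degree_part k (ft_mult c d) = (\<Sum>i\<le>k. degree_part i c * degree_part (k - i) d)"
proof -
  have "degree_part k (ft_mult c d)
      = (\<Sum>i\<le>k. \<Sum>\<gamma>\<in>words_of_length n k. smul (c (take i \<gamma>) * d (drop i \<gamma>)) (word_prod a \<gamma>))"
    unfolding degree_part_def ft_mult_def
    by (subst sum.swap, intro sum.cong refl) (simp add: words_of_length_def smul_sum_left)
  also have "\<dots> = (\<Sum>i\<le>k. degree_part i c * degree_part (k - i) d)"
  proof (intro sum.cong refl)
    fix i assume "i \<in> {..k}"
    have "(\<Sum>\<gamma>\<in>words_of_length n k. smul (c (take i \<gamma>) * d (drop i \<gamma>)) (word_prod a \<gamma>))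
        = (\<Sum>\<gamma>\<in>words_of_length n k. smul (c (take i \<gamma>)) (word_prod a (take i \<gamma>))
            * smul (d (drop i \<gamma>)) (word_prod a (drop i \<gamma>)))"
      by (simp flip: smul_mult_mult word_prod_append)
    also have "\<dots> = (\<Sum>\<beta>\<in>words_of_length n i. \<Sum>\<delta>\<in>words_of_length n (k - i).
        smul (c \<beta>) (word_prod a \<beta>) * smul (d \<delta>) (word_prod a \<delta>))"
      using \<open>i \<in> {..k}\<close> by (intro sum_words_of_length_split
          [where g = "\<lambda>\<beta> \<delta>. smul (c \<beta>) (word_prod a \<beta>) * smul (d \<delta>) (word_prod a \<delta>)"]) simp
    also have "\<dots> = degree_part i c * degree_part (k - i) d"
      by (simp add: degree_part_def sum_product)
    finally show "(\<Sum>\<gamma>\<in>words_of_length n k. smul (c (take i \<gamma>) * d (drop i \<gamma>)) (word_prod a \<gamma>))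
        = degree_part i c * degree_part (k - i) d" .
  qed
  finally show ?thesis .
qed

lemma partial_eval_mult_diff:
  "partial_eval N c * partial_eval N d - partial_eval N (ft_mult c d)
    = (\<Sum>(i, j)\<in>{..<N} \<times> {..<N} - {(i, j). i + j < N}. degree_part i c * degree_part j d)"
proof -
  have "partial_eval N c * partial_eval N d
      = (\<Sum>(i, j)\<in>{..<N} \<times> {..<N}. degree_part i c * degree_part j d)"
    unfolding partial_eval_def by (simp add: sum_product sum.cartesian_product)
  moreover have "partial_eval N (ft_mult c d)
      = (\<Sum>(i, j)\<in>{(i, j). i + j < N}. degree_part i c * degree_part j d)"
    unfolding partial_eval_def degree_part_mult by (rule sum.triangle_reindex[symmetric])
  moreover have "{(i, j). i + j < N} \<subseteq> {..<N} \<times> {..<N}" by auto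
  ultimately show ?thesis by (simp add: sum_diff)
qed

lemma seminorm_partial_eval_mult_diff_le:
  assumes p: "p \<in> P" and "0 < \<rho>" "0 \<le> C"
    and bound: "\<And>\<alpha>. \<alpha> \<in> words n \<Longrightarrow> p (word_prod a \<alpha>) \<le> C * \<rho> ^ length \<alpha>"
  shows "p (partial_eval N (ft_mult c d) - partial_eval N c * partial_eval N d)
    \<le> C * C * (\<Sum>(i, j)\<in>{..<N} \<times> {..<N} - {(i, j). i + j < N}.
                ft_degree_norm n \<rho> c i * ft_degree_norm n \<rho> d j)"
proof -
  let ?R = "{..<N} \<times> {..<N} - {(i, j). i + j < N}"
  have "p (partial_eval N (ft_mult c d) - partial_eval N c * partial_eval N d)
      = p (\<Sum>(i, j)\<in>?R. degree_part i c * degree_part j d)"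
    by (subst seminorm_diff_commute[OF p]) (simp only: partial_eval_mult_diff)
  also have "\<dots> \<le> (\<Sum>(i, j)\<in>?R. p (degree_part i c * degree_part j d))"
    using seminorm_sum[OF p] by (simp add: case_prod_unfold)
  also have "\<dots> \<le> (\<Sum>(i, j)\<in>?R. C * C * (ft_degree_norm n \<rho> c i * ft_degree_norm n \<rho> d j))"
  proof (rule sum_mono)
    fix ij :: "nat \<times> nat"
    obtain i j where ij: "ij = (i, j)" by force
    have "p (degree_part i c * degree_part j d) \<le> p (degree_part i c) * p (degree_part j d)"
      by (rule seminorm_mult[OF p])
    also have "\<dots> \<le> (C * ft_degree_norm n \<rho> c i) * (C * ft_degree_norm n \<rho> d j)"
      using assms by (intro mult_mono seminorm_degree_part_le[OF p bound] seminorm_nonneg[OF p])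
        (auto simp: ft_degree_norm_nonneg)
    finally show "(case ij of (i, j) \<Rightarrow> p (degree_part i c * degree_part j d))
        \<le> (case ij of (i, j) \<Rightarrow> C * C * (ft_degree_norm n \<rho> c i * ft_degree_norm n \<rho> d j))"
      by (simp add: ij mult_ac)
  qed
  finally show ?thesis by (simp add: sum_distrib_left case_prod_unfold)
qed

text \<open>The Cauchy-product terms outside the triangle \<open>i + j < N\<close> are dominated by those of two
  absolutely summable series, so the partial sums of a product are asymptotic to the products of
  the partial sums.\<close>

lemma series_eval_mult:
  assumes c: "c \<in> FT n r" and d: "d \<in> FT n r"
  shows "series_eval (ft_mult c d) = series_eval c * series_eval d"
proof (rule series_eval_eqI[OF FT_mult[OF c d]])
  show "converges_to (\<lambda>N. partial_eval N (ft_mult c d)) (series_eval c * series_eval d)"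
  proof (rule converges_to_asymptotic)
    show "converges_to (\<lambda>N. partial_eval N c * partial_eval N d) (series_eval c * series_eval d)"
      by (intro converges_to_mult series_eval_converges c d)
  next
    fix p assume p: "p \<in> P"
    obtain \<rho> C where \<rho>: "0 < \<rho>" "\<rho> < r" "0 \<le> C"
      and bound: "\<And>\<alpha>. \<alpha> \<in> words n \<Longrightarrow> p (word_prod a \<alpha>) \<le> C * \<rho> ^ length \<alpha>"
      using geometric_word_bound[OF p] by blast
    let ?x = "ft_degree_norm n \<rho> c" and ?y = "ft_degree_norm n \<rho> d"
    have "(\<lambda>N. \<Sum>(i, j)\<in>{..<N} \<times> {..<N} - {(i, j). i + j < N}. ?x i * ?y j) \<longlonglongrightarrow> 0"
      using \<rho> c d by (intro sum_square_minus_triangle_tendsto_zero ft_degree_norm_nonneg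
          summable_ft_degree_norm) auto
    then have lim: "(\<lambda>N. C * C * (\<Sum>(i, j)\<in>{..<N} \<times> {..<N} - {(i, j). i + j < N}. ?x i * ?y j))
        \<longlonglongrightarrow> 0"
      using tendsto_mult_left[of _ 0 sequentially "C * C"] by simp
    show "(\<lambda>N. p (partial_eval N (ft_mult c d) - partial_eval N c * partial_eval N d)) \<longlonglongrightarrow> 0"
      by (rule tendsto_sandwich[OF always_eventually always_eventually tendsto_const lim])
        (simp_all add: seminorm_nonneg[OF p] seminorm_partial_eval_mult_diff_le[OF p \<rho>(1,3) bound])
  qed
qed

lemma series_eval_ft_cont_hom: "series_eval \<in> ft_cont_homs smul P n r"
  unfolding ft_cont_homs_def mem_Collect_eq
proof (intro conjI ballI allI)
  show "series_eval \<in> extensional (FT n r)" by (simp add: series_eval_def)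
  show "series_eval ft_one = 1"
    using series_eval_monomial[of "[]"] by (simp add: ft_one_eq_monomial words_def)
qed (simp_all add: series_eval_add series_eval_smul series_eval_mult seminorm_series_eval_le)

lemma series_eval_gen: "i < n \<Longrightarrow> series_eval (ft_gen i) = a ! i"
  unfolding ft_gen_eq_monomial by (subst series_eval_monomial) (auto simp: words_def word_prod_Cons)

end

section \<open>Continuous homomorphisms out of \<open>\<F>\<^sup>T(\<D>\<^sub>r\<^sup>n)\<close>\<close>

context arens_michael
begin

lemma ft_cont_homsD:
  assumes "\<phi> \<in> ft_cont_homs smul P n r" "c \<in> FT n r" "d \<in> FT n r"
  shows "\<phi> (ft_add c d) = \<phi> c + \<phi> d" "\<phi> (ft_smul z c) = smul z (\<phi> c)"
    "\<phi> (ft_mult c d) = \<phi> c * \<phi> d" "\<phi> ft_one = 1"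
  using assms unfolding ft_cont_homs_def by auto

lemma ft_hom_bound:
  assumes "\<phi> \<in> ft_cont_homs smul P n r" "p \<in> P"
  obtains \<rho> C where "0 < \<rho>" "\<rho> < r" "0 \<le> C"
    "\<And>c. c \<in> FT n r \<Longrightarrow> p (\<phi> c) \<le> C * ft_norm n \<rho> c"
proof -
  obtain \<rho> C where \<rho>: "0 < \<rho>" "\<rho> < r"
    and bound: "\<And>c. c \<in> FT n r \<Longrightarrow> p (\<phi> c) \<le> C * ft_norm n \<rho> c"
    using assms unfolding ft_cont_homs_def by blast
  have "C * ft_norm n \<rho> c \<le> max C 0 * ft_norm n \<rho> c" for c
    using \<rho> by (intro mult_right_mono ft_norm_nonneg) auto
  with bound have max_bound: "p (\<phi> c) \<le> max C 0 * ft_norm n \<rho> c" if "c \<in> FT n r" for c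
    using that by (meson order_trans)
  show ?thesis by (rule that[OF \<rho>, of "max C 0"]) (simp_all add: max_bound)
qed

lemma ft_hom_monomial:
  assumes \<phi>: "\<phi> \<in> ft_cont_homs smul P n r"
  shows "\<alpha> \<in> words n \<Longrightarrow> \<phi> (ft_monomial \<alpha>) = word_prod (map (\<lambda>i. \<phi> (ft_gen i)) [0..<n]) \<alpha>"
proof (induction \<alpha>)
  case Nil
  then show ?case using ft_cont_homsD(4)[OF \<phi> ft_one_FT ft_one_FT] by (simp add: ft_one_eq_monomial)
next
  case (Cons i \<beta>)
  then have i: "i < n" and \<beta>: "\<beta> \<in> words n" by (auto simp: words_def)
  have "\<phi> (ft_monomial (i # \<beta>)) = \<phi> (ft_gen i) * \<phi> (ft_monomial \<beta>)"
    using ft_cont_homsD(3)[OF \<phi> ft_gen_FT[OF i] ft_monomial_FT[OF \<beta>]]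
    by (simp add: ft_mult_gen_monomial)
  then show ?case using Cons.IH[OF \<beta>] i by (simp add: word_prod_Cons)
qed

lemma ft_hom_restrict_finite:
  assumes \<phi>: "\<phi> \<in> ft_cont_homs smul P n r" and c: "c \<in> FT n r"
  shows "finite F \<Longrightarrow> F \<subseteq> words n \<Longrightarrow> \<phi> (ft_restrict c F) = (\<Sum>\<alpha>\<in>F. smul (c \<alpha>) (\<phi> (ft_monomial \<alpha>)))"
proof (induction F rule: finite_induct)
  case empty
  have "ft_restrict c {} = ft_smul 0 ft_one" by (simp add: ft_restrict_def ft_smul_def)
  then show ?case using ft_cont_homsD(2)[OF \<phi> ft_one_FT ft_one_FT] by simp
next
  case (insert \<alpha> F)
  then have \<alpha>: "\<alpha> \<in> words n" and F: "F \<subseteq> words n" by auto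
  have "ft_restrict c (insert \<alpha> F) = ft_add (ft_smul (c \<alpha>) (ft_monomial \<alpha>)) (ft_restrict c F)"
    using insert.hyps(2) by (auto simp: ft_restrict_def ft_add_def ft_smul_def ft_monomial_def)
  then have "\<phi> (ft_restrict c (insert \<alpha> F)) = smul (c \<alpha>) (\<phi> (ft_monomial \<alpha>)) + \<phi> (ft_restrict c F)"
    using ft_cont_homsD(1,2)[OF \<phi> FT_smul[OF ft_monomial_FT[OF \<alpha>]] FT_restrict[OF c]]
      ft_cont_homsD(2)[OF \<phi> ft_monomial_FT[OF \<alpha>] ft_monomial_FT[OF \<alpha>]]
    by simp
  then show ?case using insert.IH[OF F] insert.hyps by simp
qed

text \<open>Continuity against a norm of radius \<open>\<rho> < r\<close> together with the estimate at a radius between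
  \<open>\<rho>\<close> and \<open>r\<close> makes the images of the tails decay geometrically.\<close>

lemma ft_hom_tail_tendsto_zero:
  assumes \<phi>: "\<phi> \<in> ft_cont_homs smul P n r" and p: "p \<in> P" and c: "c \<in> FT n r"
  shows "(\<lambda>N. p (\<phi> (ft_restrict c (- words_shorter n N)))) \<longlonglongrightarrow> 0"
proof -
  obtain \<rho> C where \<rho>: "0 < \<rho>" "\<rho> < r" "0 \<le> C"
    and bound: "\<And>c. c \<in> FT n r \<Longrightarrow> p (\<phi> c) \<le> C * ft_norm n \<rho> c"
    using ft_hom_bound[OF \<phi> p] by blast
  define \<rho>' where "\<rho>' = (\<rho> + r) / 2"
  have \<rho>': "\<rho> < \<rho>'" "\<rho>' < r" using \<rho> unfolding \<rho>'_def by auto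
  have bound_N: "p (\<phi> (ft_restrict c (- words_shorter n N)))
      \<le> C * ((\<rho> / \<rho>') ^ N * ft_norm n \<rho>' c)" for N
    using bound[OF FT_restrict[OF c]] \<rho> \<rho>'
    by (meson order_trans mult_left_mono ft_norm_tail_le[OF c])
  have "(\<lambda>N. C * ((\<rho> / \<rho>') ^ N * ft_norm n \<rho>' c)) \<longlonglongrightarrow> C * (0 * ft_norm n \<rho>' c)"
    using \<rho> \<rho>' by (intro tendsto_intros LIMSEQ_power_zero) auto
  then have lim: "(\<lambda>N. C * ((\<rho> / \<rho>') ^ N * ft_norm n \<rho>' c)) \<longlonglongrightarrow> 0" by simp
  show ?thesis
    by (rule tendsto_sandwich[OF always_eventually always_eventually tendsto_const lim])
      (simp_all add: seminorm_nonneg[OF p] bound_N)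
qed

lemma ft_homs_eq_on_finite_restrict:
  assumes \<phi>: "\<phi> \<in> ft_cont_homs smul P n r" and \<psi>: "\<psi> \<in> ft_cont_homs smul P n r"
    and gens: "\<And>i. i < n \<Longrightarrow> \<phi> (ft_gen i) = \<psi> (ft_gen i)"
    and c: "c \<in> FT n r" and F: "finite F" "F \<subseteq> words n"
  shows "\<phi> (ft_restrict c F) = \<psi> (ft_restrict c F)"
proof -
  have same_gens: "map (\<lambda>i. \<phi> (ft_gen i)) [0..<n] = map (\<lambda>i. \<psi> (ft_gen i)) [0..<n]"
    using gens by simp
  have "\<phi> (ft_restrict c F) = (\<Sum>\<alpha>\<in>F. smul (c \<alpha>) (\<phi> (ft_monomial \<alpha>)))"
    by (rule ft_hom_restrict_finite[OF \<phi> c F])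
  also have "\<dots> = (\<Sum>\<alpha>\<in>F. smul (c \<alpha>) (\<psi> (ft_monomial \<alpha>)))"
    using F(2) by (intro sum.cong refl)
      (auto simp: ft_hom_monomial[OF \<phi>] ft_hom_monomial[OF \<psi>] same_gens)
  also have "\<dots> = \<psi> (ft_restrict c F)"
    by (rule ft_hom_restrict_finite[OF \<psi> c F, symmetric])
  finally show ?thesis .
qed

lemma ft_homs_eqI:
  assumes \<phi>: "\<phi> \<in> ft_cont_homs smul P n r" and \<psi>: "\<psi> \<in> ft_cont_homs smul P n r"
    and gens: "\<And>i. i < n \<Longrightarrow> \<phi> (ft_gen i) = \<psi> (ft_gen i)"
  shows "\<phi> = \<psi>"
proof (rule extensionalityI)
  show "\<phi> \<in> extensional (FT n r)" "\<psi> \<in> extensional (FT n r)"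
    using \<phi> \<psi> unfolding ft_cont_homs_def by auto
  fix c assume c: "c \<in> FT n r"
  have "p (\<phi> c - \<psi> c) = 0" if p: "p \<in> P" for p
  proof -
    let ?h = "\<lambda>N. ft_restrict c (words_shorter n N)"
      and ?t = "\<lambda>N. ft_restrict c (- words_shorter n N)"
    have "\<phi> (?h N) = \<psi> (?h N)" for N
      using ft_homs_eq_on_finite_restrict[OF \<phi> \<psi> gens c finite_words_shorter]
      by (simp add: words_shorter_def)
    moreover have "\<theta> c = \<theta> (?h N) + \<theta> (?t N)" if "\<theta> \<in> ft_cont_homs smul P n r" for \<theta> N
      using ft_cont_homsD(1)[OF that FT_restrict[OF c] FT_restrict[OF c],
          of "words_shorter n N" "- words_shorter n N"]
      by (simp add: ft_add_restrict_Compl)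
    ultimately have "\<phi> c - \<psi> c = \<phi> (?t N) - \<psi> (?t N)" for N
      using \<phi> \<psi> by (metis add_diff_cancel_left)
    then have "p (\<phi> c - \<psi> c) \<le> p (\<phi> (?t N)) + p (\<psi> (?t N))" for N
      using seminorm_add[OF p, of "\<phi> (?t N)" "- \<psi> (?t N)"] seminorm_minus[OF p] by simp
    moreover have "(\<lambda>N. p (\<phi> (?t N)) + p (\<psi> (?t N))) \<longlonglongrightarrow> 0"
      by (intro tendsto_add_zero ft_hom_tail_tendsto_zero[OF \<phi> p c]
          ft_hom_tail_tendsto_zero[OF \<psi> p c])
    ultimately have "p (\<phi> c - \<psi> c) \<le> 0" using LIMSEQ_le_const by fastforce
    then show ?thesis using seminorm_nonneg[OF p] by (simp add: antisym)
  qed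
  then show "\<phi> c = \<psi> c" using seminorms_separate[of "\<phi> c - \<psi> c"] by simp
qed

lemma ft_hom_gens_ssc:
  assumes \<phi>: "\<phi> \<in> ft_cont_homs smul P n r"
  shows "ssc P n r (map (\<lambda>i. \<phi> (ft_gen i)) [0..<n])"
  unfolding ssc_iff_geometric_bound
proof
  fix p assume p: "p \<in> P"
  obtain \<rho> C where \<rho>: "0 < \<rho>" "\<rho> < r" "0 \<le> C"
    and bound: "\<And>c. c \<in> FT n r \<Longrightarrow> p (\<phi> c) \<le> C * ft_norm n \<rho> c"
    using ft_hom_bound[OF \<phi> p] by blast
  have "p (word_prod (map (\<lambda>i. \<phi> (ft_gen i)) [0..<n]) \<alpha>) \<le> C * \<rho> ^ length \<alpha>" if "\<alpha> \<in> words n" for \<alpha>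
    using bound[OF ft_monomial_FT[OF that]]
    by (simp add: ft_hom_monomial[OF \<phi> that] ft_norm_monomial[OF that])
  then show "\<exists>\<rho> C. 0 < \<rho> \<and> \<rho> < r \<and> 0 \<le> C \<and>
      (\<forall>\<alpha>\<in>words n. p (word_prod (map (\<lambda>i. \<phi> (ft_gen i)) [0..<n]) \<alpha>) \<le> C * \<rho> ^ length \<alpha>)"
    using \<rho> by blast
qed

lemma cont_hom_comp_ft_hom:
  assumes \<psi>: "cont_hom smul P smulB PB \<psi>" and \<phi>: "\<phi> \<in> ft_cont_homs smul P n r"
  shows "restrict (\<psi> \<circ> \<phi>) (FT n r) \<in> ft_cont_homs smulB PB n r"
  unfolding ft_cont_homs_def mem_Collect_eq
proof (intro conjI ballI allI)
  fix c d assume c: "c \<in> FT n r" and d: "d \<in> FT n r"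
  show "restrict (\<psi> \<circ> \<phi>) (FT n r) (ft_add c d)
      = restrict (\<psi> \<circ> \<phi>) (FT n r) c + restrict (\<psi> \<circ> \<phi>) (FT n r) d"
    using \<psi> ft_cont_homsD(1)[OF \<phi> c d] by (simp add: c d FT_add cont_hom_def)
  show "restrict (\<psi> \<circ> \<phi>) (FT n r) (ft_mult c d)
      = restrict (\<psi> \<circ> \<phi>) (FT n r) c * restrict (\<psi> \<circ> \<phi>) (FT n r) d"
    using \<psi> ft_cont_homsD(3)[OF \<phi> c d] by (simp add: c d FT_mult cont_hom_def)
  show "restrict (\<psi> \<circ> \<phi>) (FT n r) (ft_smul z c) = smulB z (restrict (\<psi> \<circ> \<phi>) (FT n r) c)" for z
    using \<psi> ft_cont_homsD(2)[OF \<phi> c c] by (simp add: c FT_smul cont_hom_def)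
next
  show "restrict (\<psi> \<circ> \<phi>) (FT n r) ft_one = 1"
    using \<psi> ft_cont_homsD(4)[OF \<phi> ft_one_FT ft_one_FT] by (simp add: ft_one_FT cont_hom_def)
next
  fix q assume q: "q \<in> PB"
  then obtain p C where p: "p \<in> P" and C: "\<And>x. q (\<psi> x) \<le> C * p x"
    using \<psi> unfolding cont_hom_def by blast
  obtain \<rho> C' where \<rho>: "0 < \<rho>" "\<rho> < r"
    and bound: "\<And>c. c \<in> FT n r \<Longrightarrow> p (\<phi> c) \<le> C' * ft_norm n \<rho> c"
    using ft_hom_bound[OF \<phi> p] by blast
  have "q (restrict (\<psi> \<circ> \<phi>) (FT n r) c) \<le> (max C 0 * C') * ft_norm n \<rho> c" if c: "c \<in> FT n r" for c
  proof -
    have "C * p (\<phi> c) \<le> max C 0 * p (\<phi> c)"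
      using seminorm_nonneg[OF p] by (intro mult_right_mono) auto
    then have "q (restrict (\<psi> \<circ> \<phi>) (FT n r) c) \<le> max C 0 * p (\<phi> c)"
      using C[of "\<phi> c"] c by simp
    also have "\<dots> \<le> max C 0 * (C' * ft_norm n \<rho> c)"
      using bound[OF c] by (intro mult_left_mono) auto
    finally show ?thesis by (simp add: mult_ac)
  qed
  then show "\<exists>\<rho>>0. \<rho> < r \<and> (\<exists>C. \<forall>c\<in>FT n r. q (restrict (\<psi> \<circ> \<phi>) (FT n r) c) \<le> C * ft_norm n \<rho> c)"
    using \<rho> by blast
qed simp

end

section \<open>The universal property\<close>

lemma ex1_ft_cont_hom_gens:
  assumes "AM_algebra smul P" "ssc P n r a"
  shows "\<exists>!\<phi>. \<phi> \<in> ft_cont_homs smul P n r \<and> (\<forall>i<n. \<phi> (ft_gen i) = a ! i)"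
proof -
  interpret ssc_tuple smul P n r a
    using assms by unfold_locales
  show ?thesis
    using series_eval_ft_cont_hom series_eval_gen ft_homs_eqI by metis
qed

lemma ft_gamma:
  assumes "AM_algebra smul P" "ssc P n r a"
  shows "ft_gamma smul P n r a \<in> ft_cont_homs smul P n r"
    and "\<And>i. i < n \<Longrightarrow> ft_gamma smul P n r a (ft_gen i) = a ! i"
  using theI'[OF ex1_ft_cont_hom_gens[OF assms]] unfolding ft_gamma_def by auto

lemma ft_gamma_of_gens:
  assumes A: "AM_algebra smul P" and \<phi>: "\<phi> \<in> ft_cont_homs smul P n r"
  shows "ft_gamma smul P n r (map (\<lambda>i. \<phi> (ft_gen i)) [0..<n]) = \<phi>"
proof -
  interpret arens_michael smul P using A by unfold_locales
  show ?thesis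
    using ft_gamma[OF A ft_hom_gens_ssc[OF \<phi>]] \<phi> by (intro ft_homs_eqI) auto
qed

lemma bij_betw_ft_gamma:
  assumes A: "AM_algebra smul P"
  shows "bij_betw (ft_gamma smul P n r) {a. length a = n \<and> ssc P n r a} (ft_cont_homs smul P n r)"
proof (rule bij_betwI')
  fix a b
  assume a: "a \<in> {a. length a = n \<and> ssc P n r a}" and b: "b \<in> {a. length a = n \<and> ssc P n r a}"
  show "(ft_gamma smul P n r a = ft_gamma smul P n r b) = (a = b)"
  proof
    assume "ft_gamma smul P n r a = ft_gamma smul P n r b"
    then have "a ! i = b ! i" if "i < n" for i
      using ft_gamma(2)[OF A, of n r a i] ft_gamma(2)[OF A, of n r b i] a b that by auto
    then show "a = b" using a b by (intro nth_equalityI) auto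
  qed simp
next
  fix a assume "a \<in> {a. length a = n \<and> ssc P n r a}"
  then show "ft_gamma smul P n r a \<in> ft_cont_homs smul P n r" using ft_gamma(1)[OF A] by blast
next
  fix \<phi> assume \<phi>: "\<phi> \<in> ft_cont_homs smul P n r"
  interpret arens_michael smul P using A by unfold_locales
  show "\<exists>a\<in>{a. length a = n \<and> ssc P n r a}. \<phi> = ft_gamma smul P n r a"
    using ft_hom_gens_ssc[OF \<phi>] ft_gamma_of_gens[OF A \<phi>]
    by (intro bexI[of _ "map (\<lambda>i. \<phi> (ft_gen i)) [0..<n]"]) auto
qed

lemma ft_gamma_natural:
  fixes smulB :: "complex \<Rightarrow> 'b::ring_1 \<Rightarrow> 'b"
  assumes A: "AM_algebra smul P" and B: "AM_algebra smulB PB"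
    and \<psi>: "cont_hom smul P smulB PB \<psi>" and a: "length a = n" "ssc P n r a" and c: "c \<in> FT n r"
  shows "\<psi> (ft_gamma smul P n r a c) = ft_gamma smulB PB n r (map \<psi> a) c"
proof -
  interpret arens_michael smul P using A by unfold_locales
  let ?\<phi> = "restrict (\<psi> \<circ> ft_gamma smul P n r a) (FT n r)"
  have \<phi>: "?\<phi> \<in> ft_cont_homs smulB PB n r"
    by (rule cont_hom_comp_ft_hom[OF \<psi> ft_gamma(1)[OF A a(2)]])
  have "map (\<lambda>i. ?\<phi> (ft_gen i)) [0..<n] = map \<psi> a"
    using ft_gamma(2)[OF A a(2)] a(1) by (intro nth_equalityI) (auto simp: ft_gen_FT)
  then have "ft_gamma smulB PB n r (map \<psi> a) = ?\<phi>"
    using ft_gamma_of_gens[OF B \<phi>] by simp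
  then show ?thesis using c by simp
qed

theorem proposition6p11:
  fixes smul :: "complex \<Rightarrow> 'a::ring_1 \<Rightarrow> 'a" and P :: "('a \<Rightarrow> real) set"
    and n :: nat and r :: real
  assumes "AM_algebra smul P" and "0 < r"
  shows "(\<forall>a. length a = n \<and> ssc P n r a \<longrightarrow>
            (\<exists>!\<phi>. \<phi> \<in> ft_cont_homs smul P n r \<and> (\<forall>i<n. \<phi> (ft_gen i) = a ! i)))
       \<and> (\<forall>\<phi>\<in>ft_cont_homs smul P n r. ssc P n r (map (\<lambda>i. \<phi> (ft_gen i)) [0..<n]))
       \<and> bij_betw (ft_gamma smul P n r) {a. length a = n \<and> ssc P n r a} (ft_cont_homs smul P n r)
       \<and> (\<forall>(smulB :: complex \<Rightarrow> 'b::ring_1 \<Rightarrow> 'b) PB \<psi>.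
            AM_algebra smulB PB \<and> cont_hom smul P smulB PB \<psi> \<longrightarrow>
            (\<forall>a. length a = n \<and> ssc P n r a \<longrightarrow>
               (\<forall>c\<in>FT n r. \<psi> (ft_gamma smul P n r a c) = ft_gamma smulB PB n r (map \<psi> a) c)))"
proof -
  interpret arens_michael smul P using assms(1) by unfold_locales
  show ?thesis
    using ex1_ft_cont_hom_gens[OF assms(1)] ft_hom_gens_ssc bij_betw_ft_gamma[OF assms(1)]
      ft_gamma_natural[OF assms(1)]
    by blast
qed

end
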